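(* Let $\Phi_1,\dots,\Phi_K$ be independent homogeneous Poisson point processes in $\mathbb{R}^2$ with densities $\lambda_1,\dots,\lambda_K>0$, let $P_j>0$, let $\Psi_j$ be positive integers, and let $\alpha>2$. Attach to each $y\in\Phi_j$ a mark $g_{jy}\sim\Gamma(\Psi_j,1)$, all marks i.i.d. within each tier, independent across points and tiers and of the point processes. Let $I=\sum_{j=1}^K\sum_{y\in\Phi_j}P_jg_{jy}\|y\|^{-\alpha}$. Then for $s>0$, $$\mathbb{E}[e^{-sI}]=\exp\Big(-s^{2/\alpha}\sum_{j=1}^K\lambda_jP_j^{2/\alpha}C(\alpha,\Psi_j)\Big),$$ where $C(\alpha,\Psi)=\frac{2\pi}{\alpha}\sum_{m=1}^{\Psi}\binom{\Psi}{m}B\big(\Psi-m+\tfrac{2}{\alpha},\,m-\tfrac{2}{\alpha}\big)$ and $B(x,y)=\int_0^1t^{x-1}(1-t)^{y-1}\,dt$ is Euler's Beta function.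
   Context: $\Gamma(a,1)$ denotes the Gamma distribution with shape $a$ and scale $1$. *)

theory Defs
  imports "HOL-Probability.Probability"
begin

text \<open>A homogeneous Poisson point process on the plane with density lam, given by a
  (measurable) enumeration X of its points: the counting variable of a set A is the
  number of indices k with X k in A (points counted with multiplicity).\<close>

definition pp_count :: "(nat \<Rightarrow> 'a \<Rightarrow> real \<times> real) \<Rightarrow> (real \<times> real) set \<Rightarrow> 'a \<Rightarrow> nat" where
  "pp_count X A \<omega> = card {k. X k \<omega> \<in> A}"

definition poisson_pp :: "'a measure \<Rightarrow> real \<Rightarrow> (nat \<Rightarrow> 'a \<Rightarrow> real \<times> real) \<Rightarrow> bool" where
  "poisson_pp M lam X \<longleftrightarrow>
     (\<forall>k. X k \<in> borel_measurable M) \<and>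
     (\<forall>\<omega>\<in>space M. \<forall>A. bounded A \<longrightarrow> finite {k. X k \<omega> \<in> A}) \<and>
     (\<forall>(As :: nat \<Rightarrow> (real \<times> real) set) n.
        (\<forall>i<n. As i \<in> sets lborel \<and> bounded (As i)) \<and> disjoint_family_on As {..<n} \<longrightarrow>
          prob_space.indep_vars M (\<lambda>_. count_space UNIV) (\<lambda>i. pp_count X (As i)) {..<n} \<and>
          (\<forall>i<n. \<forall>m::nat. measure M {\<omega> \<in> space M. pp_count X (As i) \<omega> = m}
               = (lam * measure lborel (As i)) ^ m / fact m * exp (- (lam * measure lborel (As i)))))"

text \<open>Sigma-algebras for the joint independence statement: Inl j is the whole point
  sequence of tier j, Inr (j,k) is the mark of the k-th point of tier j.\<close>

definition mark_sigma :: "'a measure \<Rightarrow> (nat \<Rightarrow> nat \<Rightarrow> 'a \<Rightarrow> real \<times> real) \<Rightarrow> (nat \<Rightarrow> nat \<Rightarrow> 'a \<Rightarrow> real)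
    \<Rightarrow> nat + nat \<times> nat \<Rightarrow> 'a set set" where
  "mark_sigma M X g i = (case i of
      Inl j \<Rightarrow> sets (vimage_algebra (space M) (\<lambda>\<omega> k. X j k \<omega>) (Pi\<^sub>M UNIV (\<lambda>_. borel)))
    | Inr (j, k) \<Rightarrow> sets (vimage_algebra (space M) (g j k) borel))"

definition interference :: "nat \<Rightarrow> (nat \<Rightarrow> real) \<Rightarrow> real \<Rightarrow> (nat \<Rightarrow> nat \<Rightarrow> 'a \<Rightarrow> real \<times> real)
    \<Rightarrow> (nat \<Rightarrow> nat \<Rightarrow> 'a \<Rightarrow> real) \<Rightarrow> 'a \<Rightarrow> ennreal" where
  "interference K P alpha X g \<omega> =
     (\<Sum>j<K. \<Sum>k. (if X j k \<omega> = 0 then \<infinity>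
                    else ennreal (P j * g j k \<omega> * norm (X j k \<omega>) powr (- alpha))))"

definition exp_neg :: "real \<Rightarrow> ennreal \<Rightarrow> real" where
  "exp_neg s I = (if I = \<infinity> then 0 else exp (- s * enn2real I))"

definition C_const :: "real \<Rightarrow> nat \<Rightarrow> real" where
  "C_const alpha Psi = 2 * pi / alpha *
     (\<Sum>m=1..Psi. real (Psi choose m) * Beta (real Psi - real m + 2 / alpha) (real m - 2 / alpha))"

end

theory Submission
  imports Defs
begin

lemma exp_neg_add: "exp_neg s (a + b) = exp_neg s a * exp_neg s b"
proof (cases "a = \<infinity> \<or> b = \<infinity>")
  case True then show ?thesis by (auto simp: exp_neg_def)
next
  case False
  then have "enn2real (a + b) = enn2real a + enn2real b"
    by (simp add: enn2real_plus less_top)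
  moreover have "exp (- s * (x + y)) = exp (- s * x) * exp (- s * y)" for x y
    by (simp add: algebra_simps flip: exp_add)
  ultimately show ?thesis using False by (simp add: exp_neg_def ennreal_add_eq_top)
qed

lemma exp_neg_zero [simp]: "exp_neg s 0 = 1"
  by (simp add: exp_neg_def)

lemma exp_neg_sum: "finite A \<Longrightarrow> exp_neg s (\<Sum>j\<in>A. f j) = (\<Prod>j\<in>A. exp_neg s (f j))"
  by (induction A rule: finite_induct) (simp_all add: exp_neg_add)

lemma exp_neg_nonneg: "0 \<le> exp_neg s x"
  by (simp add: exp_neg_def)

lemma exp_neg_le_1: "0 \<le> s \<Longrightarrow> exp_neg s x \<le> 1"
  by (simp add: exp_neg_def)

lemma exp_neg_antimono:
  assumes "0 \<le> s" "x \<le> y" shows "exp_neg s y \<le> exp_neg s x"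
proof (cases "y = \<infinity>")
  case False
  with assms(2) have "x \<noteq> \<infinity>" "enn2real x \<le> enn2real y"
    by (auto simp: enn2real_mono less_top top_unique)
  with False assms(1) show ?thesis by (simp add: exp_neg_def mult_left_mono)
qed (simp add: exp_neg_def)

lemma exp_neg_measurable [measurable]: "exp_neg s \<in> borel_measurable borel"
  unfolding exp_neg_def by measurable

lemma tendsto_exp_neg_top:
  assumes s: "0 < s" and f: "(f \<longlongrightarrow> \<infinity>) F"
  shows "((\<lambda>x. exp_neg s (f x)) \<longlongrightarrow> 0) F"
proof (rule order_tendstoI)
  fix r :: real assume r: "0 < r"
  define B where "B = max 0 (- ln r / s) + 1"
  have "- ln r / s < B" by (simp add: B_def)
  then have "(- ln r / s) * s < B * s" using s by (rule mult_strict_right_mono)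
  then have "- ln r < s * B" using s by (simp add: mult.commute)
  then have "exp (- s * B) < exp (ln r)" by simp
  then have B: "exp (- s * B) < r" "0 \<le> B" using r by (simp_all add: B_def)
  have "\<forall>\<^sub>F x in F. ennreal B < f x"
    using f by (rule order_tendstoD) simp
  then show "\<forall>\<^sub>F x in F. exp_neg s (f x) < r"
  proof eventually_elim
    case (elim x)
    then have "exp_neg s (f x) \<le> exp_neg s (ennreal B)"
      using s by (intro exp_neg_antimono) auto
    also have "\<dots> = exp (- s * B)" using B by (simp add: exp_neg_def)
    finally show ?case using B by simp
  qed
qed (use exp_neg_nonneg less_le_trans in \<open>blast intro: always_eventually\<close>)

lemma tendsto_exp_neg:
  assumes s: "0 < s" and f: "(f \<longlongrightarrow> a) F"
  shows "((\<lambda>x. exp_neg s (f x)) \<longlongrightarrow> exp_neg s a) F"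
proof (cases "a = \<infinity>")
  case True
  with tendsto_exp_neg_top[OF s] f show ?thesis by (simp add: exp_neg_def)
next
  case False
  then have a: "ennreal (enn2real a) = a" by (simp add: less_top)
  have fin: "\<forall>\<^sub>F x in F. f x \<noteq> \<infinity>"
    using order_tendstoD(2)[OF f, of \<infinity>] False by (auto simp: less_top elim: eventually_mono)
  have "((\<lambda>x. enn2real (f x)) \<longlongrightarrow> enn2real a) F"
    using f by (intro tendsto_enn2real) (simp_all add: a)
  then have "((\<lambda>x. exp (- s * enn2real (f x))) \<longlongrightarrow> exp_neg s a) F"
    using False unfolding exp_neg_def by (auto intro!: tendsto_exp tendsto_minus tendsto_mult_left)
  then show ?thesis
    by (rule Lim_transform_eventually) (use fin in \<open>auto simp: exp_neg_def elim: eventually_mono\<close>)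
qed

lemma LIMSEQ_prod_exp_neg_suminf:
  fixes f :: "nat \<Rightarrow> ennreal"
  assumes "0 < s"
  shows "(\<lambda>n. \<Prod>k<n. exp_neg s (f k)) \<longlonglongrightarrow> exp_neg s (suminf f)"
  using tendsto_exp_neg[OF assms summable_LIMSEQ[OF summableI, of f]] by (simp add: exp_neg_sum)

lemma prod_le_subset_prod:
  fixes a :: "'i \<Rightarrow> real"
  assumes "finite B" "A \<subseteq> B" "\<And>k. k \<in> B \<Longrightarrow> 0 \<le> a k \<and> a k \<le> 1"
  shows "prod a B \<le> prod a A"
proof -
  have "prod a B = prod a A * prod a (B - A)"
    using assms by (metis prod.subset_diff mult.commute)
  moreover have "prod a (B - A) \<le> 1" "0 \<le> prod a A"
    using assms by (auto intro: prod_le_1 prod_nonneg)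
  ultimately show ?thesis by (simp add: mult_left_le)
qed

lemma exhaustion_covers_finite:
  fixes F :: "nat \<Rightarrow> 'i set"
  assumes mono: "\<And>R R'. R \<le> R' \<Longrightarrow> F R \<subseteq> F R'" and cov: "\<And>k. \<exists>R. k \<in> F R"
    and "finite S"
  shows "\<exists>R. S \<subseteq> F R"
  using \<open>finite S\<close>
proof (induction S rule: finite_induct)
  case (insert k S)
  then obtain R1 R2 where "S \<subseteq> F R1" "k \<in> F R2" using cov by blast
  then have "insert k S \<subseteq> F (max R1 R2)" using mono[of R1 "max R1 R2"] mono[of R2 "max R1 R2"] by auto
  then show ?case by blast
qed simp

text \<open>Infinite products of factors in \<open>[0, 1]\<close> may be taken along any exhaustion of \<open>\<nat>\<close> by
  finite sets: both sequences below are decreasing and are interleaved by inclusion.\<close>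

lemma LIMSEQ_prod_exhaustion:
  fixes a :: "nat \<Rightarrow> real" and F :: "nat \<Rightarrow> nat set"
  assumes a: "\<And>k. 0 \<le> a k" "\<And>k. a k \<le> 1" and fin: "\<And>R. finite (F R)"
    and mono: "\<And>R R'. R \<le> R' \<Longrightarrow> F R \<subseteq> F R'" and cov: "\<And>k. \<exists>R. k \<in> F R"
  shows "(\<lambda>n. \<Prod>k<n. a k) \<longlonglongrightarrow> lim (\<lambda>n. \<Prod>k<n. a k)"
    and "(\<lambda>R. \<Prod>k\<in>F R. a k) \<longlonglongrightarrow> lim (\<lambda>n. \<Prod>k<n. a k)"
proof -
  define p where "p n = (\<Prod>k<n. a k)" for n
  define q where "q R = (\<Prod>k\<in>F R. a k)" for R
  have "decseq p" "decseq q" unfolding p_def q_def decseq_def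
    using a fin mono by (auto intro!: prod_le_subset_prod) blast
  moreover have "0 \<le> p n" "0 \<le> q n" for n unfolding p_def q_def using a by (auto intro: prod_nonneg)
  ultimately obtain L L' where L: "p \<longlonglongrightarrow> L" and L': "q \<longlonglongrightarrow> L'"
    and Lp: "\<And>n. L \<le> p n" and Lq: "\<And>n. L' \<le> q n"
    using decseq_convergent[of p 0] decseq_convergent[of q 0] by metis
  have "L' \<le> p n" for n
  proof -
    obtain R where "{..<n} \<subseteq> F R" using exhaustion_covers_finite[OF mono cov] by blast
    then have "q R \<le> p n" unfolding q_def p_def using fin a by (intro prod_le_subset_prod) auto
    then show ?thesis using Lq[of R] by simp
  qed
  then have "L' \<le> L" using L by (intro LIMSEQ_le_const) auto
  moreover have "L \<le> q R" for R
  proof -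
    obtain m where "F R \<subseteq> {..<m}" using fin[of R] by (meson finite_nat_iff_bounded)
    then have "p m \<le> q R" unfolding q_def p_def using fin a by (intro prod_le_subset_prod) auto
    then show ?thesis using Lp[of m] by simp
  qed
  then have "L \<le> L'" using L' by (intro LIMSEQ_le_const) auto
  ultimately show "p \<longlonglongrightarrow> lim p" "q \<longlonglongrightarrow> lim p"
    using L L' limI[OF L] by simp_all
qed

lemma (in prob_space) expectation_power_poisson:
  fixes N :: "'a \<Rightarrow> nat"
  assumes N[measurable]: "N \<in> measurable M (count_space UNIV)" and mu: "0 \<le> mu"
    and c: "0 \<le> c" "c \<le> 1"
    and dist: "\<And>m. prob {\<omega>\<in>space M. N \<omega> = m} = mu ^ m / fact m * exp (- mu)"
  shows "expectation (\<lambda>\<omega>. c ^ N \<omega>) = exp (- mu * (1 - c))"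
proof -
  define A where "A m = {\<omega>\<in>space M. N \<omega> = m}" for m
  have A[measurable]: "A m \<in> events" for m unfolding A_def by measurable
  have "(\<lambda>m. (c * mu) ^ m /\<^sub>R fact m * exp (- mu)) sums (exp (c * mu) * exp (- mu))"
    by (intro sums_mult2 exp_converges)
  moreover have "exp (c * mu) * exp (- mu) = exp (- mu * (1 - c))"
    by (simp add: algebra_simps flip: exp_add)
  ultimately have sums: "(\<lambda>m. c ^ m * (mu ^ m / fact m * exp (- mu))) sums exp (- mu * (1 - c))"
    by (simp add: power_mult_distrib divide_inverse mult_ac)
  have "(\<integral>\<^sup>+\<omega>. ennreal (c ^ N \<omega>) \<partial>M) = (\<integral>\<^sup>+\<omega>. (\<Sum>m. ennreal (c ^ m) * indicator (A m) \<omega>) \<partial>M)"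
  proof (intro nn_integral_cong)
    fix \<omega> assume "\<omega> \<in> space M"
    then have "\<omega> \<in> A (N \<omega>)" by (simp add: A_def)
    moreover have "disjoint_family A" unfolding A_def disjoint_family_on_def by auto
    ultimately show "ennreal (c ^ N \<omega>) = (\<Sum>m. ennreal (c ^ m) * indicator (A m) \<omega>)"
      using suminf_cmult_indicator[of A \<omega> "N \<omega>" "\<lambda>m. ennreal (c ^ m)"] by simp
  qed
  also have "\<dots> = (\<Sum>m. ennreal (c ^ m) * emeasure M (A m))"
    by (simp add: nn_integral_suminf nn_integral_cmult_indicator)
  also have "\<dots> = (\<Sum>m. ennreal (c ^ m * (mu ^ m / fact m * exp (- mu))))"
    using dist c mu by (simp add: emeasure_eq_measure A_def flip: ennreal_mult)
  also have "\<dots> = ennreal (exp (- mu * (1 - c)))"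
    using c mu sums by (simp add: suminf_ennreal2 sums_summable sums_unique[symmetric])
  finally have "(\<integral>\<^sup>+\<omega>. ennreal (c ^ N \<omega>) \<partial>M) = ennreal (exp (- mu * (1 - c)))" .
  moreover have "integrable M (\<lambda>\<omega>. c ^ N \<omega>)"
    using c by (intro integrable_const_bound[where B=1]) (auto intro: power_le_one)
  ultimately show ?thesis using c by (simp add: nn_integral_eq_integral)
qed

lemma (in prob_space) expectation_prod_power_indep_poisson:
  fixes N :: "'i \<Rightarrow> 'a \<Rightarrow> nat"
  assumes indep: "indep_vars (\<lambda>_. count_space UNIV) N I" and "finite I"
    and mu: "\<And>i. i \<in> I \<Longrightarrow> 0 \<le> mu i" and c: "\<And>i. i \<in> I \<Longrightarrow> 0 \<le> c i \<and> c i \<le> 1"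
    and dist: "\<And>i m. i \<in> I \<Longrightarrow> prob {\<omega>\<in>space M. N i \<omega> = m} = mu i ^ m / fact m * exp (- mu i)"
  shows "expectation (\<lambda>\<omega>. \<Prod>i\<in>I. c i ^ N i \<omega>) = exp (- (\<Sum>i\<in>I. mu i * (1 - c i)))"
proof -
  have N: "N i \<in> measurable M (count_space UNIV)" if "i \<in> I" for i
    using indep that by (simp add: indep_vars_def2)
  have "expectation (\<lambda>\<omega>. \<Prod>i\<in>I. c i ^ N i \<omega>) = (\<Prod>i\<in>I. expectation (\<lambda>\<omega>. c i ^ N i \<omega>))"
  proof (rule indep_vars_lebesgue_integral[OF \<open>finite I\<close>])
    show "indep_vars (\<lambda>_. borel) (\<lambda>i \<omega>. c i ^ N i \<omega>) I"
      by (rule indep_vars_compose2[OF indep]) simp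
    show "integrable M (\<lambda>\<omega>. c i ^ N i \<omega>)" if "i \<in> I" for i
      using c[OF that] measurable_compose[OF N[OF that], of "\<lambda>n. c i ^ n" borel]
      by (intro integrable_const_bound[where B=1]) (auto intro: power_le_one)
  qed
  also have "\<dots> = (\<Prod>i\<in>I. exp (- mu i * (1 - c i)))"
    using N mu c dist by (intro prod.cong refl expectation_power_poisson) auto
  finally show ?thesis using \<open>finite I\<close> by (simp add: exp_sum flip: sum_negf)
qed

lemma norm_prod_le_1:
  fixes a :: "'i \<Rightarrow> real"
  assumes "\<And>k. k \<in> A \<Longrightarrow> 0 \<le> a k \<and> a k \<le> 1"
  shows "norm (prod a A) \<le> 1"
  using assms by (simp add: prod_nonneg prod_le_1)

lemma (in prob_space) bounded_convergence:
  fixes f :: "nat \<Rightarrow> 'a \<Rightarrow> real"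
  assumes f: "\<And>n. f n \<in> borel_measurable M" and bound: "\<And>n \<omega>. \<omega> \<in> space M \<Longrightarrow> norm (f n \<omega>) \<le> 1"
    and lim: "\<And>\<omega>. \<omega> \<in> space M \<Longrightarrow> (\<lambda>n. f n \<omega>) \<longlonglongrightarrow> g \<omega>"
  shows "g \<in> borel_measurable M" and "(\<lambda>n. expectation (f n)) \<longlonglongrightarrow> expectation g"
proof -
  show g: "g \<in> borel_measurable M"
    using lim f by (rule borel_measurable_LIMSEQ_real)
  show "(\<lambda>n. expectation (f n)) \<longlonglongrightarrow> expectation g"
    using f g lim bound by (intro integral_dominated_convergence[where w="\<lambda>_. 1"] AE_I2) auto
qed

text \<open>Annuli are parametrised by their squared radii, so that their area is \<open>\<pi> (b - a)\<close>.\<close>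

definition annulus :: "real \<Rightarrow> real \<Rightarrow> (real \<times> real) set" where
  "annulus a b = {x. a \<le> norm x ^ 2 \<and> norm x ^ 2 < b}"

lemma ball_sqrt_eq: "ball (0::'a::real_normed_vector) (sqrt b) = {x. norm x ^ 2 < b}"
proof -
  have "norm x < sqrt b \<longleftrightarrow> norm x ^ 2 < b" for x :: 'a
  proof -
    have "sqrt (norm x ^ 2) = norm x" by simp
    then show ?thesis by (metis real_sqrt_less_iff)
  qed
  then show ?thesis by (simp only: set_eq_iff mem_ball dist_0_norm mem_Collect_eq) blast
qed

lemma measure_lborel_ball_plane: "0 \<le> r \<Longrightarrow> measure lborel (ball (0::real \<times> real) r) = pi * r ^ 2"
  using content_ball[of r "0::real \<times> real"] unit_ball_vol_even[of 1] by (simp add: power2_eq_square)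

lemma annulus_eq_Diff_ball:
  "0 \<le> a \<Longrightarrow> a \<le> b \<Longrightarrow> annulus a b = ball 0 (sqrt b) - ball 0 (sqrt a)"
  by (auto simp: annulus_def ball_sqrt_eq)

lemma sets_annulus [measurable, simp]: "annulus a b \<in> sets borel"
  unfolding annulus_def by measurable

lemma bounded_annulus: "0 \<le> a \<Longrightarrow> a \<le> b \<Longrightarrow> bounded (annulus a b)"
  by (simp add: annulus_eq_Diff_ball bounded_subset[OF bounded_ball Diff_subset])

lemma measure_annulus: "0 \<le> a \<Longrightarrow> a \<le> b \<Longrightarrow> measure lborel (annulus a b) = pi * (b - a)"
  by (simp add: annulus_eq_Diff_ball measure_Diff emeasure_ball subset_ball measure_lborel_ball_plane
      algebra_simps)

definition grid_index :: "real \<Rightarrow> nat \<Rightarrow> real \<Rightarrow> nat" where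
  "grid_index T m t = nat \<lfloor>t * real m / T\<rfloor>"

definition grid_point :: "real \<Rightarrow> nat \<Rightarrow> real \<Rightarrow> real" where
  "grid_point T m t = T * real (grid_index T m t) / real m"

lemma grid_index_eq_iff:
  assumes "0 < T" "0 < m" "0 \<le> t"
  shows "grid_index T m t = i \<longleftrightarrow> T * real i / real m \<le> t \<and> t < T * (real i + 1) / real m"
proof -
  have "grid_index T m t = i \<longleftrightarrow> \<lfloor>t * real m / T\<rfloor> = int i"
    using assms by (auto simp: grid_index_def)
  also have "\<dots> \<longleftrightarrow> real i \<le> t * real m / T \<and> t * real m / T < real i + 1"
    by (simp add: floor_eq_iff)
  also have "\<dots> \<longleftrightarrow> T * real i / real m \<le> t \<and> t < T * (real i + 1) / real m"
    using assms by (simp add: field_simps)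
  finally show ?thesis .
qed

lemma grid_index_less_iff:
  assumes "0 < T" "0 < m" "0 \<le> t"
  shows "grid_index T m t < m \<longleftrightarrow> t < T"
proof -
  have "grid_index T m t < m \<longleftrightarrow> t * real m / T < real m"
    using assms by (simp add: grid_index_def nat_less_iff floor_less_iff)
  also have "\<dots> \<longleftrightarrow> t < T" using assms by (simp add: field_simps)
  finally show ?thesis .
qed

lemma grid_point_bounds:
  assumes "0 < T" "0 < m" "0 \<le> t"
  shows "t - T / real m \<le> grid_point T m t" "grid_point T m t \<le> t"
proof -
  define y where "y = t * real m / T"
  have "real (grid_index T m t) = of_int \<lfloor>y\<rfloor>"
    using assms by (simp add: grid_index_def y_def)
  moreover have "y - 1 \<le> of_int \<lfloor>y\<rfloor>" "of_int \<lfloor>y\<rfloor> \<le> y"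
    by linarith+
  ultimately have "T * (y - 1) / real m \<le> grid_point T m t" "grid_point T m t \<le> T * y / real m"
    unfolding grid_point_def using assms by (auto intro!: divide_right_mono mult_left_mono)
  moreover have "T * (y - 1) / real m = t - T / real m" "T * y / real m = t"
    using assms by (simp_all add: y_def field_simps)
  ultimately show "t - T / real m \<le> grid_point T m t" "grid_point T m t \<le> t" by simp_all
qed

lemma LIMSEQ_grid_point:
  assumes "0 < T" "0 \<le> t"
  shows "(\<lambda>n. grid_point T (Suc n) t) \<longlonglongrightarrow> t"
proof (rule tendsto_sandwich)
  show "\<forall>\<^sub>F n in sequentially. t - T / real (Suc n) \<le> grid_point T (Suc n) t"
    "\<forall>\<^sub>F n in sequentially. grid_point T (Suc n) t \<le> t"
    using grid_point_bounds[OF assms(1) zero_less_Suc assms(2)] by simp_all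
  show "(\<lambda>n. t - T / real (Suc n)) \<longlonglongrightarrow> t"
    using tendsto_diff[OF tendsto_const LIMSEQ_Suc[OF lim_const_over_n[of T]]] by simp
qed simp

lemma LIMSEQ_comp_grid_point:
  assumes "continuous_on {0<..} H" "0 < T" "0 \<le> t"
  shows "(\<lambda>n. H (grid_point T (Suc n) t)) \<longlonglongrightarrow> H t"
proof (cases "t = 0")
  case False
  with assms have "isCont H t" by (simp add: continuous_on_eq_continuous_at)
  then show ?thesis using isCont_tendsto_compose[OF _ LIMSEQ_grid_point[OF assms(2,3)]] by blast
qed (simp add: grid_point_def grid_index_def)

lemma grid_point_measurable [measurable]: "grid_point T m \<in> borel_measurable borel"
  unfolding grid_point_def grid_index_def by measurable

lemma integral_grid_step:
  fixes f :: "real \<Rightarrow> real"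
  assumes T: "0 < T" and m: "0 < m"
  shows "(LINT t|lborel. indicator {0..<T} t * f (grid_point T m t))
    = (\<Sum>i<m. T / real m * f (T * real i / real m))"
proof -
  define I where "I i = {T * real i / real m ..< T * (real i + 1) / real m}" for i
  have I_le: "T * real i / real m \<le> T * (real i + 1) / real m" for i
    using T m by (intro divide_right_mono mult_left_mono) auto
  have measure_I: "measure lborel (I i) = T / real m" for i
    using I_le[of i] by (simp add: I_def distrib_left add_divide_distrib)
  have step: "indicator {0..<T} t * f (grid_point T m t)
      = (\<Sum>i<m. f (T * real i / real m) * indicator (I i) t)" for t
  proof (cases "0 \<le> t \<and> t < T")
    case True
    define i0 where "i0 = grid_index T m t"
    have "i0 < m" using True grid_index_less_iff[OF T m] by (simp add: i0_def)
    have "t \<in> I i \<longleftrightarrow> i = i0" for i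
      using True grid_index_eq_iff[OF T m, of t i] by (auto simp: I_def i0_def)
    then have "(\<Sum>i<m. f (T * real i / real m) * indicator (I i) t)
        = (\<Sum>i<m. if i = i0 then f (T * real i0 / real m) else 0)"
      by (intro sum.cong) auto
    then show ?thesis using True \<open>i0 < m\<close> by (simp add: grid_point_def i0_def)
  next
    case False
    have "t \<notin> I i" if "i < m" for i
    proof
      assume "t \<in> I i"
      moreover have "T * (real i + 1) \<le> T * real m"
        using T that by (intro mult_left_mono) auto
      then have "T * (real i + 1) / real m \<le> T" using m by (simp add: divide_le_eq mult.commute)
      moreover have "0 \<le> T * real i / real m" using T by simp
      ultimately show False using False by (auto simp: I_def)
    qed
    then show ?thesis using False by simp
  qed
  have "(LINT t|lborel. indicator {0..<T} t * f (grid_point T m t))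
      = (\<Sum>i<m. LINT t|lborel. f (T * real i / real m) * indicator (I i) t)"
    unfolding step using I_le
    by (intro Bochner_Integration.integral_sum integrable_mult_right integrable_real_indicator)
       (auto simp: I_def)
  also have "\<dots> = (\<Sum>i<m. T / real m * f (T * real i / real m))"
    by (simp add: measure_I mult_ac)
  finally show ?thesis .
qed

lemma LIMSEQ_left_riemann_sum:
  fixes f :: "real \<Rightarrow> real"
  assumes f [measurable]: "f \<in> borel_measurable borel" and f_cont: "continuous_on {0<..} f"
    and f_bound: "\<And>t. \<bar>f t\<bar> \<le> B" and T: "0 < T"
  shows "(\<lambda>n. \<Sum>i<Suc n. T / real (Suc n) * f (T * real i / real (Suc n)))
           \<longlonglongrightarrow> (LINT t:{0<..<T}|lborel. f t)"
proof -
  have "(\<lambda>n. LINT t|lborel. indicator {0..<T} t * f (grid_point T (Suc n) t))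
      \<longlonglongrightarrow> (LINT t|lborel. indicator {0<..<T} t * f t)"
  proof (rule integral_dominated_convergence[where w="\<lambda>t. B * indicator {0..<T} t"])
    show "integrable lborel (\<lambda>t. B * indicator {0..<T} t :: real)"
      using T by (intro integrable_mult_right integrable_real_indicator) simp_all
    show "AE t in lborel. (\<lambda>n. indicator {0..<T} t * f (grid_point T (Suc n) t))
        \<longlonglongrightarrow> indicator {0<..<T} t * f t"
      using AE_lborel_singleton[of "0::real"]
    proof eventually_elim
      case (elim t)
      show ?case
      proof (cases "0 < t \<and> t < T")
        case True
        then show ?thesis using LIMSEQ_comp_grid_point[OF f_cont T, of t] by simp
      qed (use elim in \<open>auto simp: indicator_def\<close>)
    qed
    show "AE t in lborel. norm (indicator {0..<T} t * f (grid_point T (Suc n) t))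
        \<le> B * indicator {0..<T} t" for n
      using f_bound by (intro AE_I2) (simp split: split_indicator)
  qed measurable
  moreover have "(\<lambda>n. LINT t|lborel. indicator {0..<T} t * f (grid_point T (Suc n) t))
      = (\<lambda>n. \<Sum>i<Suc n. T / real (Suc n) * f (T * real i / real (Suc n)))"
    using integral_grid_step[OF T zero_less_Suc] by simp
  ultimately show ?thesis
    by (simp only: set_lebesgue_integral_def scaleR_conv_of_real of_real_eq_id id_apply)
qed

lemma poisson_pp_measurable:
  "poisson_pp M lam X \<Longrightarrow> X k \<in> borel_measurable M"
  unfolding poisson_pp_def by (drule conjunct1) (erule spec)

lemma poisson_pp_finite:
  "poisson_pp M lam X \<Longrightarrow> \<omega> \<in> space M \<Longrightarrow> bounded A \<Longrightarrow> finite {k. X k \<omega> \<in> A}"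
  unfolding poisson_pp_def by (drule conjunct2, drule conjunct1) blast

lemma poisson_pp_counts:
  fixes As :: "nat \<Rightarrow> (real \<times> real) set"
  assumes "poisson_pp M lam X"
    and "\<And>i. i < n \<Longrightarrow> As i \<in> sets lborel \<and> bounded (As i)" and "disjoint_family_on As {..<n}"
  shows "prob_space.indep_vars M (\<lambda>_. count_space UNIV) (\<lambda>i. pp_count X (As i)) {..<n}"
    and "i < n \<Longrightarrow> measure M {\<omega> \<in> space M. pp_count X (As i) \<omega> = m}
           = (lam * measure lborel (As i)) ^ m / fact m * exp (- (lam * measure lborel (As i)))"
proof -
  have "(\<forall>i<n. As i \<in> sets lborel \<and> bounded (As i)) \<and> disjoint_family_on As {..<n}"
    using assms(2,3) by blast
  from assms(1)[unfolded poisson_pp_def, THEN conjunct2, THEN conjunct2,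
      THEN spec[of _ As], THEN spec[of _ n], THEN mp, OF this]
  show "prob_space.indep_vars M (\<lambda>_. count_space UNIV) (\<lambda>i. pp_count X (As i)) {..<n}"
    "i < n \<Longrightarrow> measure M {\<omega> \<in> space M. pp_count X (As i) \<omega> = m}
       = (lam * measure lborel (As i)) ^ m / fact m * exp (- (lam * measure lborel (As i)))"
    by simp_all
qed

definition grid_annulus :: "real \<Rightarrow> nat \<Rightarrow> nat \<Rightarrow> (real \<times> real) set" where
  "grid_annulus T m i = annulus (T * real i / real m) (T * (real i + 1) / real m)"

lemma mem_grid_annulus_iff:
  "0 < T \<Longrightarrow> 0 < m \<Longrightarrow> x \<in> grid_annulus T m i \<longleftrightarrow> grid_index T m (norm x ^ 2) = i"
  by (simp add: grid_annulus_def annulus_def grid_index_eq_iff)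

lemma grid_annulus_props:
  assumes "0 < T" "0 < m"
  shows "grid_annulus T m i \<in> sets lborel" "bounded (grid_annulus T m i)"
    and "measure lborel (grid_annulus T m i) = pi * (T / real m)"
proof -
  have "0 \<le> T * real i / real m" "T * real i / real m \<le> T * (real i + 1) / real m"
    using assms by (auto intro!: divide_right_mono)
  moreover have "T * (real i + 1) / real m - T * real i / real m = T / real m"
    by (simp add: distrib_left add_divide_distrib)
  ultimately show "grid_annulus T m i \<in> sets lborel" "bounded (grid_annulus T m i)"
    "measure lborel (grid_annulus T m i) = pi * (T / real m)"
    by (simp_all add: grid_annulus_def bounded_annulus measure_annulus)
qed

lemma (in prob_space) poisson_pp_grid_annuli:
  assumes PP: "poisson_pp M lam X" and T: "0 < T" and m: "0 < m"
  shows "indep_vars (\<lambda>_. count_space UNIV) (\<lambda>i. pp_count X (grid_annulus T m i)) {..<m}"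
    and "i < m \<Longrightarrow> prob {\<omega> \<in> space M. pp_count X (grid_annulus T m i) \<omega> = n}
           = (lam * (pi * (T / real m))) ^ n / fact n * exp (- (lam * (pi * (T / real m))))"
proof -
  have "disjoint_family_on (grid_annulus T m) {..<m}"
    by (auto simp: disjoint_family_on_def mem_grid_annulus_iff[OF T m])
  note counts = poisson_pp_counts[OF PP _ this] grid_annulus_props[OF T m]
  show "indep_vars (\<lambda>_. count_space UNIV) (\<lambda>i. pp_count X (grid_annulus T m i)) {..<m}"
    "i < m \<Longrightarrow> prob {\<omega> \<in> space M. pp_count X (grid_annulus T m i) \<omega> = n}
       = (lam * (pi * (T / real m))) ^ n / fact n * exp (- (lam * (pi * (T / real m))))"
    using counts by simp_all
qed

text \<open>Moving each point of the disc of squared radius \<open>T\<close> to the inner boundary of its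
  grid annulus turns a product over the points into a product over the annuli.\<close>

lemma prod_points_grid_annuli:
  fixes x :: "nat \<Rightarrow> real \<times> real" and H :: "real \<Rightarrow> real"
  assumes fin: "\<And>A. bounded A \<Longrightarrow> finite {k. x k \<in> A}" and T: "0 < T" and m: "0 < m"
  shows "(\<Prod>k | x k \<in> ball 0 (sqrt T). H (grid_point T m (norm (x k) ^ 2)))
       = (\<Prod>i<m. H (T * real i / real m) ^ card {k. x k \<in> grid_annulus T m i})"
proof -
  define S where "S i = {k. x k \<in> grid_annulus T m i}" for i
  have "x k \<in> ball 0 (sqrt T) \<longleftrightarrow> grid_index T m (norm (x k) ^ 2) < m" for k
    using grid_index_less_iff[OF T m, of "norm (x k) ^ 2"] by (simp add: ball_sqrt_eq)
  then have "{k. x k \<in> ball 0 (sqrt T)} = (\<Union>i<m. S i)"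
    by (auto simp: S_def mem_grid_annulus_iff[OF T m])
  moreover have "(\<Prod>k\<in>(\<Union>i<m. S i). h k) = (\<Prod>i<m. \<Prod>k\<in>S i. h k)" for h :: "nat \<Rightarrow> real"
  proof (rule prod.UNION_disjoint)
    show "\<forall>i\<in>{..<m}. finite (S i)"
      unfolding S_def using fin grid_annulus_props(2)[OF T m] by blast
    show "\<forall>i\<in>{..<m}. \<forall>j\<in>{..<m}. i \<noteq> j \<longrightarrow> S i \<inter> S j = {}"
      by (auto simp: S_def mem_grid_annulus_iff[OF T m])
  qed simp
  ultimately have "(\<Prod>k | x k \<in> ball 0 (sqrt T). H (grid_point T m (norm (x k) ^ 2)))
      = (\<Prod>i<m. \<Prod>k\<in>S i. H (grid_point T m (norm (x k) ^ 2)))"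
    by (simp only:)
  also have "\<dots> = (\<Prod>i<m. \<Prod>k\<in>S i. H (T * real i / real m))"
    by (intro prod.cong refl) (simp add: S_def mem_grid_annulus_iff[OF T m] grid_point_def)
  finally show ?thesis unfolding S_def by (simp only: prod_constant)
qed

lemma (in prob_space) expectation_prod_grid_annuli:
  assumes PP: "poisson_pp M lam X" and lam: "0 \<le> lam" and c: "\<And>i. 0 \<le> c i \<and> c i \<le> 1"
    and T: "0 < T" and m: "0 < m"
  shows "(\<lambda>\<omega>. \<Prod>i<m. c i ^ pp_count X (grid_annulus T m i) \<omega>) \<in> borel_measurable M"
    and "expectation (\<lambda>\<omega>. \<Prod>i<m. c i ^ pp_count X (grid_annulus T m i) \<omega>)
      = exp (- lam * pi * (\<Sum>i<m. T / real m * (1 - c i)))"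
proof -
  note annuli = poisson_pp_grid_annuli[OF PP T m]
  have count: "pp_count X (grid_annulus T m i) \<in> measurable M (count_space UNIV)" if "i < m" for i
    using annuli(1) that unfolding indep_vars_def2 by blast
  have "(\<lambda>\<omega>. c i ^ pp_count X (grid_annulus T m i) \<omega>) \<in> borel_measurable M" if "i < m" for i
    by (rule measurable_compose[OF count[OF that]]) simp
  then show "(\<lambda>\<omega>. \<Prod>i<m. c i ^ pp_count X (grid_annulus T m i) \<omega>) \<in> borel_measurable M"
    by (intro borel_measurable_prod) simp
  have "expectation (\<lambda>\<omega>. \<Prod>i<m. c i ^ pp_count X (grid_annulus T m i) \<omega>)
      = exp (- (\<Sum>i<m. lam * (pi * (T / real m)) * (1 - c i)))"
    using lam T c annuli by (intro expectation_prod_power_indep_poisson) auto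
  also have "(\<Sum>i<m. lam * (pi * (T / real m)) * (1 - c i)) = lam * pi * (\<Sum>i<m. T / real m * (1 - c i))"
    by (simp add: sum_distrib_left mult.assoc)
  finally show "expectation (\<lambda>\<omega>. \<Prod>i<m. c i ^ pp_count X (grid_annulus T m i) \<omega>)
      = exp (- lam * pi * (\<Sum>i<m. T / real m * (1 - c i)))"
    by simp
qed

lemma (in prob_space) laplace_functional_ball:
  fixes X :: "nat \<Rightarrow> 'a \<Rightarrow> real \<times> real" and H :: "real \<Rightarrow> real"
  assumes PP: "poisson_pp M lam X" and lam: "0 \<le> lam"
    and H [measurable]: "H \<in> borel_measurable borel" and H_cont: "continuous_on {0<..} H"
    and H_unit: "\<And>t. 0 \<le> H t \<and> H t \<le> 1" and T: "0 < T"
  shows "(\<lambda>\<omega>. \<Prod>k | X k \<omega> \<in> ball 0 (sqrt T). H (norm (X k \<omega>) ^ 2)) \<in> borel_measurable M"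
    and "expectation (\<lambda>\<omega>. \<Prod>k | X k \<omega> \<in> ball 0 (sqrt T). H (norm (X k \<omega>) ^ 2))
           = exp (- lam * pi * (LINT t:{0<..<T}|lborel. 1 - H t))"
proof -
  define Q where "Q m \<omega> = (\<Prod>i<m. H (T * real i / real m) ^ pp_count X (grid_annulus T m i) \<omega>)"
    for m \<omega>
  have grid: "Q (Suc n) \<in> borel_measurable M"
    "expectation (Q (Suc n))
      = exp (- lam * pi * (\<Sum>i<Suc n. T / real (Suc n) * (1 - H (T * real i / real (Suc n)))))" for n
    unfolding Q_def
    using expectation_prod_grid_annuli[where c="\<lambda>i. H (T * real i / real (Suc n))" and m="Suc n",
        OF PP lam H_unit T zero_less_Suc]
    by simp_all
  have Q_bound: "norm (Q m \<omega>) \<le> 1" for m \<omega>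
    unfolding Q_def using H_unit by (intro norm_prod_le_1) (auto intro: power_le_one)
  have Q_lim: "(\<lambda>n. Q (Suc n) \<omega>) \<longlonglongrightarrow> (\<Prod>k | X k \<omega> \<in> ball 0 (sqrt T). H (norm (X k \<omega>) ^ 2))"
    if "\<omega> \<in> space M" for \<omega>
  proof -
    have "Q (Suc n) \<omega> = (\<Prod>k | X k \<omega> \<in> ball 0 (sqrt T). H (grid_point T (Suc n) (norm (X k \<omega>) ^ 2)))"
      for n
      using prod_points_grid_annuli[OF poisson_pp_finite[OF PP that] T, of "Suc n" H]
      by (simp add: Q_def pp_count_def)
    then show ?thesis
      by (simp only:) (intro tendsto_prod LIMSEQ_comp_grid_point[OF H_cont T], simp)
  qed
  note conv = bounded_convergence[of "\<lambda>n. Q (Suc n)", OF grid(1) Q_bound Q_lim]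
  then show "(\<lambda>\<omega>. \<Prod>k | X k \<omega> \<in> ball 0 (sqrt T). H (norm (X k \<omega>) ^ 2)) \<in> borel_measurable M"
    by blast
  have "(\<lambda>n. \<Sum>i<Suc n. T / real (Suc n) * (1 - H (T * real i / real (Suc n))))
      \<longlonglongrightarrow> (LINT t:{0<..<T}|lborel. 1 - H t)"
    using H_cont H_unit by (intro LIMSEQ_left_riemann_sum[where B=1] T) (auto intro: continuous_intros)
  then have "(\<lambda>n. expectation (Q (Suc n))) \<longlonglongrightarrow> exp (- lam * pi * (LINT t:{0<..<T}|lborel. 1 - H t))"
    unfolding grid(2) by (intro tendsto_intros)
  with conv show "expectation (\<lambda>\<omega>. \<Prod>k | X k \<omega> \<in> ball 0 (sqrt T). H (norm (X k \<omega>) ^ 2))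
      = exp (- lam * pi * (LINT t:{0<..<T}|lborel. 1 - H t))"
    by (blast intro: LIMSEQ_unique)
qed

lemma LIMSEQ_set_integral_Ioo_square:
  fixes f :: "real \<Rightarrow> real"
  assumes "set_integrable lborel {0<..} f"
  shows "(\<lambda>R. LINT t:{0<..<real (Suc R) ^ 2}|lborel. f t) \<longlonglongrightarrow> (LINT t:{0<..}|lborel. f t)"
proof -
  have "real (Suc m) ^ 2 \<le> real (Suc n) ^ 2" if "m \<le> n" for m n
    using that by (intro power_mono) auto
  then have "incseq (\<lambda>R. {0<..<real (Suc R) ^ 2})"
    unfolding incseq_def by (intro allI impI greaterThanLessThan_subseteq_greaterThanLessThan[THEN iffD2])
      (simp del: of_nat_Suc)
  moreover have "(\<Union>R. {0<..<real (Suc R) ^ 2}) = {0<..}"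
  proof (intro subset_antisym subsetI)
    fix t :: real assume "t \<in> {0<..}"
    then have "0 < t" by simp
    obtain n :: nat where "t < real n" using reals_Archimedean2 by blast
    moreover have "real n \<le> real (Suc n) ^ 2"
      using power_increasing[of 1 2 "real (Suc n)"] by simp
    ultimately have "t < real (Suc n) ^ 2" by (rule less_le_trans)
    with \<open>0 < t\<close> show "t \<in> (\<Union>R. {0<..<real (Suc R) ^ 2})"
      by (intro UN_I[of n]) simp_all
  qed auto
  ultimately show ?thesis
    using set_integral_cont_up[of "\<lambda>R. {0<..<real (Suc R) ^ 2}" lborel f] assms by simp
qed

lemma (in prob_space) laplace_functional:
  fixes X :: "nat \<Rightarrow> 'a \<Rightarrow> real \<times> real" and H :: "real \<Rightarrow> real"
  assumes PP: "poisson_pp M lam X" and lam: "0 \<le> lam"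
    and H [measurable]: "H \<in> borel_measurable borel" and H_cont: "continuous_on {0<..} H"
    and H_unit: "\<And>t. 0 \<le> H t \<and> H t \<le> 1"
    and H_int: "set_integrable lborel {0<..} (\<lambda>t. 1 - H t)"
  shows "(\<lambda>n. expectation (\<lambda>\<omega>. \<Prod>k<n. H (norm (X k \<omega>) ^ 2)))
           \<longlonglongrightarrow> exp (- lam * pi * (LINT t:{0<..}|lborel. 1 - H t))"
proof -
  have [measurable]: "X k \<in> borel_measurable M" for k
    using PP by (rule poisson_pp_measurable)
  define a where "a \<omega> k = H (norm (X k \<omega>) ^ 2)" for \<omega> k
  define F where "F \<omega> R = {k. X k \<omega> \<in> ball 0 (sqrt (real (Suc R) ^ 2))}" for \<omega> R
  define L where "L \<omega> = lim (\<lambda>n. \<Prod>k<n. a \<omega> k)" for \<omega>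
  have a_unit: "0 \<le> a \<omega> k" "a \<omega> k \<le> 1" for \<omega> k using H_unit by (auto simp: a_def)
  have lims: "(\<lambda>n. \<Prod>k<n. a \<omega> k) \<longlonglongrightarrow> L \<omega>" "(\<lambda>R. \<Prod>k\<in>F \<omega> R. a \<omega> k) \<longlonglongrightarrow> L \<omega>"
    if \<omega>: "\<omega> \<in> space M" for \<omega>
  proof -
    have "finite (F \<omega> R)" for R
      unfolding F_def by (rule poisson_pp_finite[OF PP \<omega>]) simp
    moreover have "F \<omega> R \<subseteq> F \<omega> R'" if "R \<le> R'" for R R'
      using that by (auto simp: F_def)
    moreover have "\<exists>R. k \<in> F \<omega> R" for k
    proof -
      obtain n :: nat where "norm (X k \<omega>) < real n" using reals_Archimedean2 by blast
      then show ?thesis by (auto simp: F_def intro!: exI[of _ n])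
    qed
    ultimately show "(\<lambda>n. \<Prod>k<n. a \<omega> k) \<longlonglongrightarrow> L \<omega>" "(\<lambda>R. \<Prod>k\<in>F \<omega> R. a \<omega> k) \<longlonglongrightarrow> L \<omega>"
      using LIMSEQ_prod_exhaustion[of "a \<omega>" "F \<omega>", OF a_unit] by (simp_all add: L_def)
  qed
  have bound: "norm (\<Prod>k\<in>S. a \<omega> k) \<le> 1" for S \<omega>
    using a_unit by (intro norm_prod_le_1) auto
  have E1: "(\<lambda>n. expectation (\<lambda>\<omega>. \<Prod>k<n. a \<omega> k)) \<longlonglongrightarrow> expectation L"
    using lims bound by (intro bounded_convergence(2)) (auto simp: a_def)
  have E2: "(\<lambda>R. expectation (\<lambda>\<omega>. \<Prod>k\<in>F \<omega> R. a \<omega> k)) \<longlonglongrightarrow> expectation L"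
  proof (intro bounded_convergence(2))
    show "(\<lambda>\<omega>. \<Prod>k\<in>F \<omega> R. a \<omega> k) \<in> borel_measurable M" for R
      unfolding F_def a_def by (rule laplace_functional_ball(1)[OF PP lam H H_cont H_unit]) simp
  qed (use lims bound in auto)
  have "(\<lambda>R. expectation (\<lambda>\<omega>. \<Prod>k\<in>F \<omega> R. a \<omega> k))
      = (\<lambda>R. exp (- lam * pi * (LINT t:{0<..<real (Suc R) ^ 2}|lborel. 1 - H t)))"
    unfolding F_def a_def by (intro ext laplace_functional_ball(2)[OF PP lam H H_cont H_unit]) simp
  then have E3: "(\<lambda>R. expectation (\<lambda>\<omega>. \<Prod>k\<in>F \<omega> R. a \<omega> k))
      \<longlonglongrightarrow> exp (- lam * pi * (LINT t:{0<..}|lborel. 1 - H t))"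
    using LIMSEQ_set_integral_Ioo_square[OF H_int] by (simp only:) (intro tendsto_intros)
  show ?thesis using E1 LIMSEQ_unique[OF E2 E3] by (simp add: a_def)
qed

text \<open>With \<open>a = \<alpha> / 2\<close> and \<open>c = s P\<close>, \<open>laplace_factor a c \<Psi> (\<parallel>x\<parallel>\<^sup>2)\<close> is
  \<open>E[exp (- s P g \<parallel>x\<parallel>\<^sup>-\<^sup>\<alpha>)]\<close> for \<open>g \<sim> \<Gamma>(\<Psi>, 1)\<close>, see \<open>integral_mark_factor\<close> below.\<close>

definition laplace_factor :: "real \<Rightarrow> real \<Rightarrow> nat \<Rightarrow> real \<Rightarrow> real" where
  "laplace_factor a c Psi t = (if t \<le> 0 then 0 else (t powr a / (t powr a + c)) ^ Psi)"

lemma laplace_factor_measurable [measurable]: "laplace_factor a c Psi \<in> borel_measurable borel"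
  unfolding laplace_factor_def by measurable

lemma laplace_factor_unit:
  assumes "0 < c" shows "0 \<le> laplace_factor a c Psi t \<and> laplace_factor a c Psi t \<le> 1"
proof -
  have "0 < t powr a + c" using assms by (intro add_nonneg_pos) auto
  then show ?thesis using assms by (auto simp: laplace_factor_def power_le_one)
qed

lemma continuous_on_laplace_factor:
  assumes "0 < c" shows "continuous_on {0<..} (laplace_factor a c Psi)"
proof -
  have "t powr a + c \<noteq> 0" for t using assms by (metis add_nonneg_pos powr_ge_zero less_irrefl)
  then have "continuous_on {0<..} (\<lambda>t. (t powr a / (t powr a + c)) ^ Psi)"
    by (intro continuous_intros) auto
  then show ?thesis
    by (rule continuous_on_cong[THEN iffD1, rotated 2]) (simp_all add: laplace_factor_def)
qed

text \<open>The substitution \<open>t = (c v / (1 - v)) powr d\<close> maps \<open>(0, 1)\<close> onto \<open>(0, \<infinity>)\<close> and turns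
  \<open>laplace_factor a c \<Psi> t\<close> into \<open>v ^ \<Psi>\<close> when \<open>a d = 1\<close>.\<close>

definition beta_subst :: "real \<Rightarrow> real \<Rightarrow> real \<Rightarrow> real" where
  "beta_subst c d v = (c * v / (1 - v)) powr d"

lemma laplace_factor_beta_subst:
  assumes "0 < c" "a * d = 1" "0 < v" "v < 1"
  shows "laplace_factor a c Psi (beta_subst c d v) = v ^ Psi"
proof -
  have "0 < c * v / (1 - v)" using assms by simp
  moreover have "c * v / (1 - v) / (c * v / (1 - v) + c) = v" using assms by (simp add: field_simps)
  ultimately show ?thesis
    using assms by (simp add: laplace_factor_def beta_subst_def powr_powr mult.commute[of d a])
qed

lemma has_real_derivative_beta_subst:
  assumes c: "0 < c" and v: "0 < v" "v < 1"
  shows "(beta_subst c d has_real_derivative d * c powr d * v powr (d - 1) * (1 - v) powr (- d - 1))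
    (at v)"
proof -
  define u where "u v = c * v / (1 - v)" for v
  have u': "(u has_real_derivative c / (1 - v) ^ 2) (at v)"
    unfolding u_def using v by (auto intro!: derivative_eq_intros simp: field_simps power2_eq_square)
  have "0 < u v" using c v by (simp add: u_def)
  moreover have "beta_subst c d = (\<lambda>v. u v powr d)"
    unfolding beta_subst_def u_def by (rule ext) (rule refl)
  ultimately have
    "(beta_subst c d has_real_derivative d * u v powr (d - 1) * (c / (1 - v) ^ 2)) (at v)"
    using DERIV_fun_powr[OF u', of d] by (simp only: of_nat_1)
  moreover have "d * u v powr (d - 1) * (c / (1 - v) ^ 2)
      = d * c powr d * v powr (d - 1) * (1 - v) powr (- d - 1)"
  proof -
    have w: "0 < 1 - v" using v by simp
    have "(1 - v) powr (d - 1) * (1 - v) ^ 2 = (1 - v) powr (d - 1) * (1 - v) powr 2"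
      using w by simp
    also have "\<dots> = (1 - v) powr (d + 1)" by (subst powr_add[symmetric]) (simp add: add.commute)
    finally have inv: "1 / ((1 - v) powr (d - 1) * (1 - v) ^ 2) = (1 - v) powr (- d - 1)"
      by (simp add: powr_minus_divide[symmetric])
    have "u v powr (d - 1) = c powr (d - 1) * v powr (d - 1) / (1 - v) powr (d - 1)"
      unfolding u_def using c v by (simp add: powr_divide powr_mult)
    then have "d * u v powr (d - 1) * (c / (1 - v) ^ 2)
        = d * (c powr (d - 1) * c) * v powr (d - 1) * (1 / ((1 - v) powr (d - 1) * (1 - v) ^ 2))"
      using w by simp
    also have "\<dots> = d * c powr d * v powr (d - 1) * (1 - v) powr (- d - 1)"
      using c powr_add[of c "d - 1" 1] by (simp add: inv)
    finally show ?thesis .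
  qed
  ultimately show ?thesis by simp
qed

lemma filterlim_powr_at_top:
  assumes "0 < (p::real)" shows "filterlim (\<lambda>x. x powr p) at_top at_top"
proof (subst filterlim_cong[OF refl refl])
  show "LIM x at_top. exp (p * ln x) :> at_top"
    by (rule filterlim_compose[OF exp_at_top filterlim_tendsto_pos_mult_at_top[OF tendsto_const]])
       (simp_all add: ln_at_top assms)
  show "eventually (\<lambda>x. x powr p = exp (p * ln x)) at_top"
    using eventually_gt_at_top[of 0] by eventually_elim (simp add: powr_def)
qed

lemma beta_subst_at_right_0:
  assumes "0 < c" "0 < d" shows "(beta_subst c d \<longlongrightarrow> 0) (at_right 0)"
proof -
  have "((\<lambda>v. c * v / (1 - v)) \<longlongrightarrow> 0) (at_right 0)"
    by (auto intro!: tendsto_eq_intros)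
  moreover have "\<forall>\<^sub>F v in at_right 0. 0 \<le> c * v / (1 - v)"
    unfolding eventually_at_right_field using assms by (intro exI[of _ 1]) auto
  ultimately show ?thesis
    unfolding beta_subst_def using assms(2) by (rule tendsto_zero_powrI[OF _ tendsto_const])
qed

lemma beta_subst_at_left_1:
  assumes "0 < c" "0 < d" shows "filterlim (beta_subst c d) at_top (at_left 1)"
proof -
  have "filterlim (\<lambda>v. inverse (1 - v)) at_top (at_left (1::real))"
  proof (rule filterlim_inverse_at_top)
    show "((\<lambda>v. 1 - v) \<longlongrightarrow> (0::real)) (at_left 1)" by (auto intro!: tendsto_eq_intros)
    show "\<forall>\<^sub>F v in at_left 1. 0 < 1 - (v::real)"
      unfolding eventually_at_left_field by (intro exI[of _ 0]) auto
  qed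
  moreover have "((\<lambda>v. c * v) \<longlongrightarrow> c) (at_left (1::real))"
    by (auto intro!: tendsto_eq_intros)
  ultimately have "filterlim (\<lambda>v. c * v * inverse (1 - v)) at_top (at_left (1::real))"
    using filterlim_tendsto_pos_mult_at_top assms(1) by blast
  then show ?thesis unfolding beta_subst_def divide_inverse
    by (rule filterlim_compose[OF filterlim_powr_at_top[OF assms(2)]])
qed

definition beta_kernel :: "real \<Rightarrow> real \<Rightarrow> real \<Rightarrow> real" where
  "beta_kernel p q t = t powr (p - 1) * (1 - t) powr (q - 1)"

lemma beta_kernel_measurable [measurable]: "beta_kernel p q \<in> borel_measurable borel"
  unfolding beta_kernel_def by measurable

lemma set_integral_beta_kernel:
  assumes p: "0 < p" and q: "0 < q"
  shows "set_integrable lborel {0<..<1} (beta_kernel p q)"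
    and "(LINT t:{0<..<1}|lborel. beta_kernel p q t) = Beta p q"
proof -
  have hi: "(beta_kernel p q has_integral Beta p q) {0<..<1}"
    using has_integral_Beta_real[OF p q] by (simp add: has_integral_Icc_iff_Ioo beta_kernel_def[abs_def])
  then have "beta_kernel p q absolutely_integrable_on {0<..<1}"
    by (intro nonnegative_absolutely_integrable_1) (auto simp: has_integral_integrable beta_kernel_def)
  moreover have "(\<lambda>x. indicator {0<..<1} x *\<^sub>R beta_kernel p q x) \<in> borel_measurable lborel"
    by measurable
  note integrable_completion[OF this]
  ultimately show si: "set_integrable lborel {0<..<1} (beta_kernel p q)"
    unfolding set_integrable_def by simp
  have "(LINT t:{0<..<1}|lborel. beta_kernel p q t) = integral {0<..<1} (beta_kernel p q)"
    by (rule set_borel_integral_eq_integral(2)[OF si])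
  also have "\<dots> = Beta p q" using hi by (rule integral_unique)
  finally show "(LINT t:{0<..<1}|lborel. beta_kernel p q t) = Beta p q" .
qed

lemma one_minus_power_binomial:
  fixes v :: real
  shows "1 - v ^ Psi = (\<Sum>m=1..Psi. real (Psi choose m) * (1 - v) ^ m * v ^ (Psi - m))"
proof -
  have "1 = ((1 - v) + v) ^ Psi" by simp
  also have "\<dots> = (\<Sum>m=0..Psi. real (Psi choose m) * (1 - v) ^ m * v ^ (Psi - m))"
    by (simp only: binomial_ring atMost_atLeast0)
  also have "\<dots> = v ^ Psi + (\<Sum>m=1..Psi. real (Psi choose m) * (1 - v) ^ m * v ^ (Psi - m))"
    by (subst sum.atLeast_Suc_atMost) simp_all
  finally show ?thesis by simp
qed

lemma one_minus_power_mult_beta_subst_deriv: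
  fixes v c d :: real
  assumes v: "0 < v" "v < 1"
  shows "(1 - v ^ Psi) * (d * c powr d * v powr (d - 1) * (1 - v) powr (- d - 1))
    = c powr d * d * (\<Sum>m=1..Psi. real (Psi choose m) * beta_kernel (real Psi - real m + d) (real m - d) v)"
proof -
  have w: "0 < 1 - v" using v by simp
  have "v ^ (Psi - m) * v powr (d - 1) = v powr (real Psi - real m + d - 1)" if "m \<le> Psi" for m
  proof -
    have "v ^ (Psi - m) = v powr (real Psi - real m)"
      using that v by (simp add: powr_realpow[symmetric] of_nat_diff)
    then show ?thesis by (simp add: powr_add[symmetric] algebra_simps)
  qed
  moreover have "(1 - v) ^ m * (1 - v) powr (- d - 1) = (1 - v) powr (real m - d - 1)" for m
  proof -
    have "(1 - v) ^ m = (1 - v) powr (real m)" using w by (simp add: powr_realpow)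
    then show ?thesis by (simp add: powr_add[symmetric] algebra_simps)
  qed
  ultimately have "(v ^ (Psi - m) * v powr (d - 1)) * ((1 - v) ^ m * (1 - v) powr (- d - 1))
      = beta_kernel (real Psi - real m + d) (real m - d) v" if "m \<in> {1..Psi}" for m
    using that by (simp add: beta_kernel_def diff_diff_eq)
  then show ?thesis
    unfolding one_minus_power_binomial sum_distrib_right sum_distrib_left
    by (intro sum.cong refl) (simp add: mult_ac)
qed

lemma set_integral_beta_kernel_sum:
  fixes Psi :: nat and d :: real
  assumes d: "0 < d" "d < 1"
  defines "b \<equiv> \<lambda>m. beta_kernel (real Psi - real m + d) (real m - d)"
  shows "set_integrable lborel {0<..<1} (\<lambda>v. \<Sum>m=1..Psi. real (Psi choose m) * b m v)"
    and "(LINT v:{0<..<1}|lborel. \<Sum>m=1..Psi. real (Psi choose m) * b m v)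
      = (\<Sum>m=1..Psi. real (Psi choose m) * Beta (real Psi - real m + d) (real m - d))"
proof -
  have pos: "0 < real Psi - real m + d" "0 < real m - d" if "m \<in> {1..Psi}" for m
    using that d by auto
  have indicator_sum: "indicator {0<..<1} v *\<^sub>R (\<Sum>m=1..Psi. real (Psi choose m) * b m v)
      = (\<Sum>m=1..Psi. real (Psi choose m) * (indicator {0<..<1} v *\<^sub>R b m v))" for v :: real
    by (simp add: sum_distrib_left mult_ac)
  have int: "integrable lborel (\<lambda>v. indicator {0<..<1} v *\<^sub>R b m v)" if "m \<in> {1..Psi}" for m
    using set_integral_beta_kernel(1)[OF pos[OF that]] by (simp add: set_integrable_def b_def)
  show "set_integrable lborel {0<..<1} (\<lambda>v. \<Sum>m=1..Psi. real (Psi choose m) * b m v)"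
    unfolding set_integrable_def indicator_sum
    by (intro Bochner_Integration.integrable_sum integrable_mult_right) (use int in auto)
  have "(LINT v:{0<..<1}|lborel. \<Sum>m=1..Psi. real (Psi choose m) * b m v)
      = (\<Sum>m=1..Psi. real (Psi choose m) * (LINT v:{0<..<1}|lborel. b m v))"
    unfolding set_lebesgue_integral_def indicator_sum using int
    by (subst Bochner_Integration.integral_sum) (auto intro!: integrable_mult_right)
  also have "\<dots> = (\<Sum>m=1..Psi. real (Psi choose m) * Beta (real Psi - real m + d) (real m - d))"
    using set_integral_beta_kernel(2)[OF pos] by (simp add: b_def)
  finally show "(LINT v:{0<..<1}|lborel. \<Sum>m=1..Psi. real (Psi choose m) * b m v)
      = (\<Sum>m=1..Psi. real (Psi choose m) * Beta (real Psi - real m + d) (real m - d))" .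
qed

lemma set_integral_beta_subst:
  fixes f :: "real \<Rightarrow> real"
  assumes c: "0 < c" and d: "0 < d" and f_cont: "continuous_on {0<..} f" and f_nonneg: "\<And>t. 0 \<le> f t"
    and int: "set_integrable lborel {0<..<1}
      (\<lambda>v. f (beta_subst c d v) * (d * c powr d * v powr (d - 1) * (1 - v) powr (- d - 1)))"
  shows "set_integrable lborel {0<..} f"
    and "(LINT t:{0<..}|lborel. f t)
      = (LINT v:{0<..<1}|lborel. f (beta_subst c d v) * (d * c powr d * v powr (d - 1) * (1 - v) powr (- d - 1)))"
proof -
  define g' where "g' = (\<lambda>v. d * c powr d * v powr (d - 1) * (1 - v) powr (- d - 1))"
  have ei: "einterval (ereal 0) \<infinity> = {0<..}" "einterval (ereal 0) (ereal 1) = {0<..<1::real}"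
    by (auto simp: einterval_def)
  have "isCont f (beta_subst c d v)" if "0 < v" "v < 1" for v
    using c that f_cont by (simp add: beta_subst_def continuous_on_eq_continuous_at)
  then have prems: "\<And>v. ereal 0 < ereal v \<Longrightarrow> ereal v < ereal 1 \<Longrightarrow> DERIV (beta_subst c d) v :> g' v"
    "\<And>v. ereal 0 < ereal v \<Longrightarrow> ereal v < ereal 1 \<Longrightarrow> isCont f (beta_subst c d v)"
    "\<And>v. ereal 0 < ereal v \<Longrightarrow> ereal v < ereal 1 \<Longrightarrow> isCont g' v"
    "\<And>v. ereal 0 < ereal v \<Longrightarrow> ereal v < ereal 1 \<Longrightarrow> 0 \<le> f (beta_subst c d v)"
    "\<And>v. ereal 0 \<le> ereal v \<Longrightarrow> ereal v \<le> ereal 1 \<Longrightarrow> 0 \<le> g' v"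
    using c d has_real_derivative_beta_subst[OF c] f_nonneg
    by (auto simp: g'_def intro!: continuous_intros)
  have lims: "((ereal \<circ> beta_subst c d \<circ> real_of_ereal) \<longlongrightarrow> ereal 0) (at_right (ereal 0))"
    "((ereal \<circ> beta_subst c d \<circ> real_of_ereal) \<longlongrightarrow> \<infinity>) (at_left (ereal 1))"
     apply (use beta_subst_at_right_0[OF c d] in \<open>simp add: o_assoc ereal_tendsto_simps\<close>)
    by (use beta_subst_at_left_1[OF c d] in \<open>simp add: o_assoc ereal_tendsto_simps\<close>)
  have "set_integrable lborel (einterval (ereal 0) (ereal 1)) (\<lambda>v. f (beta_subst c d v) * g' v)"
    using int by (simp add: ei g'_def)
  note subst = interval_integral_substitution_nonneg[where a="ereal 0" and b="ereal 1" and A="ereal 0"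
      and B=\<infinity> and f=f and g="beta_subst c d" and g'=g', OF _ prems lims this]
  show "set_integrable lborel {0<..} f"
    using subst(1) unfolding ei by simp
  have "(LINT t:{0<..}|lborel. f t) = (LBINT x=ereal 0..\<infinity>. f x)"
    by (simp add: interval_lebesgue_integral_def ei)
  also have "\<dots> = (LBINT v=ereal 0..ereal 1. f (beta_subst c d v) * g' v)"
    using subst(2) by simp
  finally show "(LINT t:{0<..}|lborel. f t)
      = (LINT v:{0<..<1}|lborel. f (beta_subst c d v) * (d * c powr d * v powr (d - 1) * (1 - v) powr (- d - 1)))"
    by (simp add: interval_lebesgue_integral_def ei(2) g'_def)
qed

lemma integral_one_minus_laplace_factor:
  fixes a c d :: real
  assumes d: "0 < d" "d < 1" and ad: "a * d = 1" and c: "0 < c"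
  shows "set_integrable lborel {0<..} (\<lambda>t. 1 - laplace_factor a c Psi t)"
    and "(LINT t:{0<..}|lborel. 1 - laplace_factor a c Psi t)
           = c powr d * d * (\<Sum>m=1..Psi. real (Psi choose m) * Beta (real Psi - real m + d) (real m - d))"
proof -
  define f where "f = (\<lambda>t. 1 - laplace_factor a c Psi t)"
  define B where "B v = (\<Sum>m=1..Psi. real (Psi choose m) *
    beta_kernel (real Psi - real m + d) (real m - d) v)" for v
  note B_int = set_integral_beta_kernel_sum[OF d, of Psi, folded B_def]
  have fg: "f (beta_subst c d v) * (d * c powr d * v powr (d - 1) * (1 - v) powr (- d - 1))
      = c powr d * d * B v" if "0 < v" "v < 1" for v
    using that laplace_factor_beta_subst[OF c ad that]
      one_minus_power_mult_beta_subst_deriv[OF that, of Psi d c]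
    by (simp add: f_def B_def)
  have f_cont: "continuous_on {0<..} f"
    unfolding f_def by (intro continuous_intros continuous_on_laplace_factor c)
  have f_nonneg: "0 \<le> f t" for t using laplace_factor_unit[OF c] by (simp add: f_def)
  have "set_integrable lborel {0<..<1}
      (\<lambda>v. f (beta_subst c d v) * (d * c powr d * v powr (d - 1) * (1 - v) powr (- d - 1)))"
    using B_int(1)
    by (subst set_integrable_cong[OF refl refl, where f'="\<lambda>v. c powr d * d * B v"]) (auto simp: fg)
  note subst = set_integral_beta_subst[OF c d(1) f_cont f_nonneg this]
  then show "set_integrable lborel {0<..} (\<lambda>t. 1 - laplace_factor a c Psi t)"
    unfolding f_def by blast
  have "(LINT t:{0<..}|lborel. 1 - laplace_factor a c Psi t) = (LINT t:{0<..}|lborel. f t)"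
    by (simp add: f_def)
  also have "\<dots> = (LINT v:{0<..<1}|lborel. c powr d * d * B v)"
    unfolding subst(2) by (rule set_lebesgue_integral_cong) (auto simp: fg)
  finally show "(LINT t:{0<..}|lborel. 1 - laplace_factor a c Psi t)
           = c powr d * d * (\<Sum>m=1..Psi. real (Psi choose m) * Beta (real Psi - real m + d) (real m - d))"
    using B_int(2) by (simp add: B_def)
qed

lemma integral_erlang_density:
  assumes "0 < l"
  shows "integrable lborel (erlang_density k l)" and "(LINT x|lborel. erlang_density k l x) = 1"
proof -
  have "(\<integral>\<^sup>+ x. ennreal (erlang_density k l x) \<partial>lborel) = 1"
    using nn_integral_erlang_ith_moment[OF assms, of k 0] by simp
  then show "integrable lborel (erlang_density k l)" "(LINT x|lborel. erlang_density k l x) = 1"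
    using assms by (auto intro!: integrableI_nonneg simp: integral_eq_nn_integral)
qed

lemma integral_erlang_density_exp:
  assumes b: "0 \<le> b"
  shows "(LINT u|lborel. erlang_density k 1 u * exp (- b * u)) = 1 / (1 + b) ^ Suc k"
proof -
  have "erlang_density k 1 u * exp (- b * u) = erlang_density k (1 + b) u / (1 + b) ^ Suc k" for u
  proof (cases "u < 0")
    case False
    have "erlang_density k 1 u * exp (- b * u) = u ^ k * (exp (- u) * exp (- b * u)) / fact k"
      using False by (simp add: erlang_density_def)
    also have "exp (- u) * exp (- b * u) = exp (- (1 + b) * u)"
      by (simp add: algebra_simps flip: exp_add)
    also have "u ^ k * exp (- (1 + b) * u) / fact k = erlang_density k (1 + b) u / (1 + b) ^ Suc k"
      using False b by (simp add: erlang_density_def)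
    finally show ?thesis .
  qed (simp add: erlang_density_def)
  then show ?thesis
    using integral_erlang_density(2)[of "1 + b" k] b by simp
qed

definition mark_factor :: "real \<Rightarrow> real \<Rightarrow> real \<Rightarrow> real \<times> real \<Rightarrow> real \<Rightarrow> real" where
  "mark_factor s P alpha x u = exp_neg s (if x = 0 then \<infinity> else ennreal (P * u * norm x powr (- alpha)))"

lemma mark_factor_measurable [measurable]:
  "(\<lambda>p. mark_factor s P alpha (fst p) (snd p)) \<in> borel_measurable (borel \<Otimes>\<^sub>M borel)"
  unfolding mark_factor_def by measurable

lemma mark_factor_measurable' [measurable]: "mark_factor s P alpha x \<in> borel_measurable borel"
  unfolding mark_factor_def by measurable

lemma mark_factor_unit: "0 < s \<Longrightarrow> 0 \<le> mark_factor s P alpha x u \<and> mark_factor s P alpha x u \<le> 1"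
  unfolding mark_factor_def using exp_neg_nonneg exp_neg_le_1 by auto

lemma integral_mark_factor:
  assumes s: "0 < s" and P: "0 < P" and alpha: "0 < alpha" and Psi: "1 \<le> Psi"
  shows "(LINT u|density lborel (erlang_density (Psi - 1) 1). mark_factor s P alpha x u)
           = laplace_factor (alpha / 2) (s * P) Psi (norm x ^ 2)"
proof (cases "x = 0")
  case True
  then show ?thesis
    by (simp add: integral_density mark_factor_def exp_neg_def laplace_factor_def)
next
  case False
  define R where "R = norm x powr alpha"
  have R: "0 < R" using False by (simp add: R_def)
  have w: "norm x powr (- alpha) = 1 / R" by (simp add: R_def powr_minus_divide)
  have pointwise: "erlang_density (Psi - 1) 1 u * mark_factor s P alpha x u
      = erlang_density (Psi - 1) 1 u * exp (- (s * P / R) * u)" for u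
    using False P s R by (cases "u < 0") (auto simp: erlang_density_def mark_factor_def exp_neg_def w)
  have "(LINT u|density lborel (erlang_density (Psi - 1) 1). mark_factor s P alpha x u)
      = (LINT u|lborel. erlang_density (Psi - 1) 1 u * mark_factor s P alpha x u)"
    by (subst integral_density) auto
  also have "\<dots> = 1 / (1 + s * P / R) ^ Suc (Psi - 1)"
    unfolding pointwise using s P R by (intro integral_erlang_density_exp) simp
  also have "\<dots> = (R / (R + s * P)) ^ Psi"
  proof -
    have "1 / (1 + s * P / R) = R / (R + s * P)" using R s P by (simp add: field_simps)
    moreover have "Suc (Psi - 1) = Psi" using Psi by simp
    ultimately show ?thesis by (simp only: power_one_over[symmetric])
  qed
  finally have "(LINT u|density lborel (erlang_density (Psi - 1) 1). mark_factor s P alpha x u)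
      = (R / (R + s * P)) ^ Psi" .
  moreover have "norm x ^ 2 = norm x powr 2" using False by simp
  then have "(norm x ^ 2) powr (alpha / 2) = R" by (simp only: powr_powr) (simp add: R_def)
  ultimately show ?thesis using False by (simp add: laplace_factor_def)
qed

lemma (in prob_space) distr_indep_identical_PiM:
  fixes G :: "nat \<Rightarrow> 'a \<Rightarrow> 'b"
  assumes "0 < n" and indep: "indep_vars (\<lambda>_. N) G {..<n}" and distr: "\<And>k. distr M N (G k) = D"
  shows "distr M (\<Pi>\<^sub>M k\<in>{..<n}. N) (\<lambda>\<omega>. \<lambda>k\<in>{..<n}. G k \<omega>) = (\<Pi>\<^sub>M k\<in>{..<n}. D)"
  using assms indep_vars_iff_distr_eq_PiM'[where I="{..<n}" and M'="\<lambda>_. N" and X=G]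
  by (simp add: indep_vars_def2 lessThan_empty_iff)

lemma (in prob_space) expectation_indep_var_iterated:
  fixes f :: "'b \<times> 'b \<Rightarrow> real"
  assumes indep: "indep_var S Zx T Zg" and f: "f \<in> borel_measurable (S \<Otimes>\<^sub>M T)"
    and bound: "\<And>p. norm (f p) \<le> B"
  shows "expectation (\<lambda>\<omega>. f (Zx \<omega>, Zg \<omega>))
    = (\<integral>x. (\<integral>y. f (x, y) \<partial>distr M T Zg) \<partial>distr M S Zx)"
proof -
  have Zx: "random_variable S Zx" and Zg: "random_variable T Zg"
    using indep by (auto dest: indep_var_rv1 indep_var_rv2)
  interpret Prod: pair_prob_space "distr M S Zx" "distr M T Zg"
    by (simp add: pair_prob_space_def pair_sigma_finite_def prob_space_imp_sigma_finite
        prob_space_distr Zx Zg)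
  have sets_eq: "sets (distr M S Zx \<Otimes>\<^sub>M distr M T Zg) = sets (S \<Otimes>\<^sub>M T)"
    by (rule sets_pair_measure_cong[OF sets_distr sets_distr])
  have "expectation (\<lambda>\<omega>. f (Zx \<omega>, Zg \<omega>)) = integral\<^sup>L (distr M (S \<Otimes>\<^sub>M T) (\<lambda>\<omega>. (Zx \<omega>, Zg \<omega>))) f"
    using f Zx Zg by (intro integral_distr[symmetric]) auto
  also have "\<dots> = integral\<^sup>L (distr M S Zx \<Otimes>\<^sub>M distr M T Zg) f"
    using indep by (simp add: indep_var_distribution_eq)
  also have "\<dots> = (\<integral>x. (\<integral>y. f (x, y) \<partial>distr M T Zg) \<partial>distr M S Zx)"
  proof (rule Prod.integral_fst'[symmetric], rule Prod.P.integrable_const_bound[where B=B])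
    show "f \<in> borel_measurable (distr M S Zx \<Otimes>\<^sub>M distr M T Zg)"
      unfolding measurable_cong_sets[OF sets_eq refl] by (rule f)
  qed (use bound in auto)
  finally show ?thesis .
qed

text \<open>\<open>indep_var\<close> requires both random variables to take values in the same type, so the
  marks \<open>G k\<close> are embedded into the plane as \<open>(G k, 0)\<close>.\<close>

lemma (in prob_space) expectation_prod_indep_marks:
  fixes X :: "nat \<Rightarrow> 'a \<Rightarrow> real \<times> real" and G :: "nat \<Rightarrow> 'a \<Rightarrow> real"
    and \<phi> :: "(real \<times> real) \<times> real \<Rightarrow> real" and \<psi> :: "real \<times> real \<Rightarrow> real"
  assumes X [measurable]: "\<And>k. X k \<in> borel_measurable M"
    and G [measurable]: "\<And>k. G k \<in> borel_measurable M"
    and indep_points_marks: "indep_var (\<Pi>\<^sub>M k\<in>UNIV. borel) (\<lambda>\<omega> k. X k \<omega>)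
                 (\<Pi>\<^sub>M k\<in>{..<n}. borel \<Otimes>\<^sub>M borel) (\<lambda>\<omega>. \<lambda>k\<in>{..<n}. (G k \<omega>, 0::real))"
    and indep_marks: "indep_vars (\<lambda>_. borel \<Otimes>\<^sub>M borel) (\<lambda>k \<omega>. (G k \<omega>, 0::real)) {..<n}"
    and distr: "\<And>k. distr M borel (G k) = D"
    and \<phi> [measurable]: "\<phi> \<in> borel_measurable (borel \<Otimes>\<^sub>M borel)"
    and \<phi>_unit: "\<And>p. 0 \<le> \<phi> p \<and> \<phi> p \<le> 1"
    and \<psi>: "\<And>x. \<psi> x = (LINT u|D. \<phi> (x, u))" and \<psi>_meas [measurable]: "\<psi> \<in> borel_measurable borel"
  shows "expectation (\<lambda>\<omega>. \<Prod>k<n. \<phi> (X k \<omega>, G k \<omega>)) = expectation (\<lambda>\<omega>. \<Prod>k<n. \<psi> (X k \<omega>))"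
proof (cases "n = 0")
  case False
  define S :: "(nat \<Rightarrow> real \<times> real) measure" where "S = (\<Pi>\<^sub>M k\<in>UNIV. borel)"
  define \<Gamma> where "\<Gamma> = distr D (borel \<Otimes>\<^sub>M borel) (\<lambda>u::real. (u, 0::real))"
  define \<Phi> where "\<Phi> p = (\<Prod>k<n. \<phi> (fst p k, fst (snd p k)))" for p :: "_ \<times> (nat \<Rightarrow> real \<times> real)"
  have D: "prob_space D" "sets D = sets borel"
    using distr[of 0] prob_space_distr[of "G 0" borel] by auto
  interpret \<Gamma>: prob_space \<Gamma>
    unfolding \<Gamma>_def by (rule prob_space.prob_space_distr[OF D(1)]) (simp add: measurable_cong_sets[OF D(2)])
  interpret PiD: product_prob_space "\<lambda>_. \<Gamma>" ..
  have embed: "(\<lambda>u::real. (u, 0::real)) \<in> measurable D (borel \<Otimes>\<^sub>M borel)"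
    unfolding measurable_cong_sets[OF D(2) refl] by measurable
  have "distr M (borel \<Otimes>\<^sub>M borel) (\<lambda>\<omega>. (G k \<omega>, 0)) = \<Gamma>" for k
    using distr_distr[of "\<lambda>u::real. (u, 0::real)" borel "borel \<Otimes>\<^sub>M borel" "G k" M]
    by (simp add: \<Gamma>_def distr comp_def)
  then have distr_marks: "distr M (\<Pi>\<^sub>M k\<in>{..<n}. borel \<Otimes>\<^sub>M borel) (\<lambda>\<omega>. \<lambda>k\<in>{..<n}. (G k \<omega>, 0))
      = (\<Pi>\<^sub>M k\<in>{..<n}. \<Gamma>)"
    using distr_indep_identical_PiM[where G="\<lambda>k \<omega>. (G k \<omega>, 0)", OF _ indep_marks] False by simp
  have "\<Phi> \<in> borel_measurable (S \<Otimes>\<^sub>M (\<Pi>\<^sub>M k\<in>{..<n}. borel \<Otimes>\<^sub>M borel))"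
    unfolding \<Phi>_def S_def by measurable
  moreover have "norm (\<Phi> p) \<le> 1" for p
    using \<phi>_unit by (simp add: \<Phi>_def norm_prod_le_1 del: real_norm_def)
  ultimately have "expectation (\<lambda>\<omega>. \<Prod>k<n. \<phi> (X k \<omega>, G k \<omega>))
      = (\<integral>x. (\<integral>y. \<Phi> (x, y) \<partial>\<Pi>\<^sub>M k\<in>{..<n}. \<Gamma>) \<partial>distr M S (\<lambda>\<omega> k. X k \<omega>))"
    using expectation_indep_var_iterated[OF indep_points_marks, of \<Phi> 1]
    by (simp add: \<Phi>_def S_def distr_marks)
  also have "\<dots> = (\<integral>x. (\<Prod>k<n. \<psi> (x k)) \<partial>distr M S (\<lambda>\<omega> k. X k \<omega>))"
  proof (intro Bochner_Integration.integral_cong refl)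
    fix x :: "nat \<Rightarrow> real \<times> real"
    have "(\<integral>y. \<Phi> (x, y) \<partial>\<Pi>\<^sub>M k\<in>{..<n}. \<Gamma>)
        = (\<integral>y. (\<Prod>k\<in>{..<n}. (\<lambda>z. \<phi> (x k, fst z)) (y k)) \<partial>\<Pi>\<^sub>M k\<in>{..<n}. \<Gamma>)"
      by (simp add: \<Phi>_def)
    also have "\<dots> = (\<Prod>k<n. LINT z|\<Gamma>. \<phi> (x k, fst z))"
    proof (rule PiD.product_integral_prod)
      show "integrable \<Gamma> (\<lambda>z. \<phi> (x k, fst z))" for k
      proof (rule \<Gamma>.integrable_const_bound[where B=1])
        have "sets \<Gamma> = sets (borel \<Otimes>\<^sub>M borel)" by (simp add: \<Gamma>_def)
        then show "(\<lambda>z. \<phi> (x k, fst z)) \<in> borel_measurable \<Gamma>"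
          unfolding measurable_cong_sets[OF _ refl] by measurable
      qed (use \<phi>_unit in \<open>auto intro: AE_I2\<close>)
    qed simp
    also have "\<dots> = (\<Prod>k<n. \<psi> (x k))"
      unfolding \<Gamma>_def \<psi> by (subst integral_distr[OF embed]) simp_all
    finally show "(\<integral>y. \<Phi> (x, y) \<partial>\<Pi>\<^sub>M k\<in>{..<n}. \<Gamma>) = (\<Prod>k<n. \<psi> (x k))" .
  qed
  also have "\<dots> = expectation (\<lambda>\<omega>. \<Prod>k<n. \<psi> (X k \<omega>))"
    by (subst integral_distr) (simp_all add: S_def measurable_PiM_single')
  finally show ?thesis .
qed simp

lemma (in prob_space) laplace_transform_tier:
  fixes X :: "nat \<Rightarrow> 'a \<Rightarrow> real \<times> real" and G :: "nat \<Rightarrow> 'a \<Rightarrow> real"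
  assumes PP: "poisson_pp M lam X" and lam: "0 \<le> lam" and P: "0 < P" and Psi: "1 \<le> Psi"
    and alpha: "2 < alpha" and s: "0 < s"
    and indep_points_marks: "\<And>n. indep_var (\<Pi>\<^sub>M k\<in>UNIV. borel) (\<lambda>\<omega> k. X k \<omega>)
      (\<Pi>\<^sub>M k\<in>{..<n}. borel \<Otimes>\<^sub>M borel) (\<lambda>\<omega>. \<lambda>k\<in>{..<n}. (G k \<omega>, 0::real))"
    and indep_marks: "\<And>n. indep_vars (\<lambda>_. borel \<Otimes>\<^sub>M borel) (\<lambda>k \<omega>. (G k \<omega>, 0::real)) {..<n}"
    and G_distr: "\<And>k. distributed M lborel (G k) (erlang_density (Psi - 1) 1)"
  shows "expectation (\<lambda>\<omega>. exp_neg s (\<Sum>k. if X k \<omega> = 0 then \<infinity>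
                    else ennreal (P * G k \<omega> * norm (X k \<omega>) powr (- alpha))))
       = exp (- (s powr (2 / alpha)) * (lam * P powr (2 / alpha) * C_const alpha Psi))"
proof -
  have X [measurable]: "X k \<in> borel_measurable M" for k using PP by (rule poisson_pp_measurable)
  have G [measurable]: "G k \<in> borel_measurable M" for k using G_distr by (simp add: distributed_def)
  define D where "D = density lborel (erlang_density (Psi - 1) 1)"
  define \<phi> where "\<phi> p = mark_factor s P alpha (fst p) (snd p)" for p
  define H where "H = laplace_factor (alpha / 2) (s * P) Psi"
  have sP: "0 < s * P" using s P by simp
  have \<phi>_unit: "0 \<le> \<phi> p \<and> \<phi> p \<le> 1" for p using mark_factor_unit[OF s] by (simp add: \<phi>_def)
  have G_D: "distr M borel (G k) = D" for k
    using G_distr[of k] distr_cong[of M M lborel borel "G k" "G k"] by (simp add: distributed_def D_def)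
  have H_D: "H (norm x ^ 2) = (LINT u|D. \<phi> (x, u))" for x
    using integral_mark_factor[OF s P _ Psi, of alpha x] alpha by (simp add: H_def D_def \<phi>_def)
  have \<phi> [measurable]: "\<phi> \<in> borel_measurable (borel \<Otimes>\<^sub>M borel)"
    unfolding \<phi>_def by measurable
  have E_marks: "expectation (\<lambda>\<omega>. \<Prod>k<n. \<phi> (X k \<omega>, G k \<omega>))
      = expectation (\<lambda>\<omega>. \<Prod>k<n. H (norm (X k \<omega>) ^ 2))" for n
    by (rule expectation_prod_indep_marks[OF X G indep_points_marks indep_marks G_D \<phi> \<phi>_unit H_D])
      (simp add: H_def)
  have "(\<lambda>n. \<Prod>k<n. \<phi> (X k \<omega>, G k \<omega>)) \<longlonglongrightarrow> exp_neg s (\<Sum>k. if X k \<omega> = 0 then \<infinity>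
      else ennreal (P * G k \<omega> * norm (X k \<omega>) powr (- alpha)))" for \<omega>
    unfolding \<phi>_def mark_factor_def fst_conv snd_conv by (rule LIMSEQ_prod_exp_neg_suminf[OF s])
  then have "(\<lambda>n. expectation (\<lambda>\<omega>. \<Prod>k<n. \<phi> (X k \<omega>, G k \<omega>)))
      \<longlonglongrightarrow> expectation (\<lambda>\<omega>. exp_neg s (\<Sum>k. if X k \<omega> = 0 then \<infinity>
      else ennreal (P * G k \<omega> * norm (X k \<omega>) powr (- alpha))))"
    using \<phi>_unit by (intro bounded_convergence(2) norm_prod_le_1) measurable
  moreover have "(\<lambda>n. expectation (\<lambda>\<omega>. \<Prod>k<n. \<phi> (X k \<omega>, G k \<omega>)))
      \<longlonglongrightarrow> exp (- lam * pi * (LINT t:{0<..}|lborel. 1 - H t))"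
    unfolding E_marks H_def using alpha sP laplace_factor_unit[OF sP]
    by (intro laplace_functional[OF PP lam] continuous_on_laplace_factor
        integral_one_minus_laplace_factor(1)[where d="2 / alpha"]) auto
  moreover have "lam * pi * (LINT t:{0<..}|lborel. 1 - H t)
      = s powr (2 / alpha) * (lam * P powr (2 / alpha) * C_const alpha Psi)"
    using alpha sP integral_one_minus_laplace_factor(2)[where d="2 / alpha", of "alpha / 2" "s * P" Psi]
    by (simp add: H_def C_const_def powr_mult field_simps)
  ultimately show ?thesis by (metis (no_types, lifting) LIMSEQ_unique minus_mult_left)
qed

lemma (in prob_space) indep_vars_grouped:
  fixes E :: "'i \<Rightarrow> 'a set set" and I :: "'j \<Rightarrow> 'i set"
    and Z :: "'j \<Rightarrow> 'a \<Rightarrow> 'b" and N :: "'j \<Rightarrow> 'b measure"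
  assumes indep: "indep_sets E (\<Union>j\<in>J. I j)" and stable: "\<And>i. Int_stable (E i)"
    and disj: "disjoint_family_on I J"
    and meas: "\<And>j. j \<in> J \<Longrightarrow> Z j \<in> measurable (sigma (space M) (\<Union>i\<in>I j. E i)) (N j)"
  shows "indep_vars N Z J"
  unfolding indep_vars_def2
proof
  have events: "E i \<subseteq> events" if "i \<in> (\<Union>j\<in>J. I j)" for i
    using indep that unfolding indep_sets_def by blast
  have Pow: "(\<Union>i\<in>I j. E i) \<subseteq> Pow (space M)" if "j \<in> J" for j
    using events that sets.sets_into_space by blast
  have space: "space (sigma (space M) (\<Union>i\<in>I j. E i)) = space M" if "j \<in> J" for j
    using Pow[OF that] by (simp add: space_measure_of_conv)
  have sets: "sets (sigma (space M) (\<Union>i\<in>I j. E i)) = sigma_sets (space M) (\<Union>i\<in>I j. E i)"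
    if "j \<in> J" for j
    using Pow[OF that] by (simp add: sets_measure_of)
  have sub: "sigma_sets (space M) (\<Union>i\<in>I j. E i) \<subseteq> events" if "j \<in> J" for j
    using events that by (intro sets.sigma_sets_subset) blast
  show "\<forall>j\<in>J. random_variable (N j) (Z j)"
  proof
    fix j assume j: "j \<in> J"
    have "measurable (sigma (space M) (\<Union>i\<in>I j. E i)) (N j) \<subseteq> measurable M (N j)"
      by (rule measurable_mono) (use sets[OF j] sub[OF j] space[OF j] in auto)
    then show "random_variable (N j) (Z j)" using meas[OF j] by blast
  qed
  have "indep_sets (\<lambda>j. sigma_sets (space M) (\<Union>i\<in>I j. E i)) J"
    by (rule indep_sets_collect_sigma[OF indep]) (use stable disj in auto)
  then show "indep_sets (\<lambda>j. {Z j -` A \<inter> space M | A. A \<in> sets (N j)}) J"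
  proof (rule indep_sets_mono_sets)
    fix j assume j: "j \<in> J"
    show "{Z j -` A \<inter> space M | A. A \<in> sets (N j)} \<subseteq> sigma_sets (space M) (\<Union>i\<in>I j. E i)"
      using measurable_sets[OF meas[OF j]] sets[OF j] space[OF j] by auto
  qed
qed

lemma measurable_sigma_UN_vimage_algebra:
  assumes i: "i \<in> I" and Ei: "E i = sets (vimage_algebra \<Omega> f N)" and f: "f \<in> \<Omega> \<rightarrow> space N"
    and Pow: "\<And>i. i \<in> I \<Longrightarrow> E i \<subseteq> Pow \<Omega>"
  shows "f \<in> measurable (sigma \<Omega> (\<Union>i\<in>I. E i)) N"
proof -
  have UN: "(\<Union>i\<in>I. E i) \<subseteq> Pow \<Omega>" using Pow by blast
  have "sets (vimage_algebra \<Omega> f N) \<subseteq> sets (sigma \<Omega> (\<Union>i\<in>I. E i))"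
    using i Ei UN by (auto simp: sets_measure_of intro: sigma_sets.Basic)
  moreover have "space (sigma \<Omega> (\<Union>i\<in>I. E i)) = \<Omega>" using UN by (simp add: space_measure_of_conv)
  ultimately have "measurable (vimage_algebra \<Omega> f N) N \<subseteq> measurable (sigma \<Omega> (\<Union>i\<in>I. E i)) N"
    by (intro measurable_mono) auto
  then show ?thesis using measurable_vimage_algebra1[OF f] by blast
qed

lemma sets_vimage_algebra_Pow: "sets (vimage_algebra \<Omega> f N) \<subseteq> Pow \<Omega>"
  using sets.sets_into_space[of _ "vimage_algebra \<Omega> f N"] by auto

lemma mark_sigma_Pow: "mark_sigma M X g i \<subseteq> Pow (space M)"
  by (auto simp: mark_sigma_def sets_vimage_algebra_Pow split: sum.splits prod.splits)

lemma mark_sigma_Int_stable: "Int_stable (mark_sigma M X g i)"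
  by (auto simp: mark_sigma_def intro!: Int_stableI split: sum.splits prod.splits)

lemma measurable_points_mark_sigma:
  "Inl j \<in> I \<Longrightarrow> (\<lambda>\<omega> k. X j k \<omega>) \<in> measurable (sigma (space M) (\<Union>i\<in>I. mark_sigma M X g i)) (\<Pi>\<^sub>M k\<in>UNIV. borel)"
  by (rule measurable_sigma_UN_vimage_algebra[OF _ _ _ mark_sigma_Pow]) (auto simp: mark_sigma_def space_PiM)

lemma measurable_mark_mark_sigma:
  "Inr (j, k) \<in> I \<Longrightarrow> g j k \<in> borel_measurable (sigma (space M) (\<Union>i\<in>I. mark_sigma M X g i))"
  by (rule measurable_sigma_UN_vimage_algebra[OF _ _ _ mark_sigma_Pow]) (auto simp: mark_sigma_def)

lemma (in prob_space) indep_tier_points_marks: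
  assumes indep: "indep_sets (mark_sigma M X g) U" and tier: "Inl j \<in> U" "\<And>k. Inr (j, k) \<in> U"
  shows "indep_var (\<Pi>\<^sub>M k\<in>UNIV. borel) (\<lambda>\<omega> k. X j k \<omega>)
      (\<Pi>\<^sub>M k\<in>{..<n}. borel \<Otimes>\<^sub>M borel) (\<lambda>\<omega>. \<lambda>k\<in>{..<n}. (g j k \<omega>, 0::real))"
    and "indep_vars (\<lambda>_. borel \<Otimes>\<^sub>M borel) (\<lambda>k \<omega>. (g j k \<omega>, 0::real)) {..<n}"
proof -
  define I where "I b = (if b then {Inl j} else {Inr (j, k) | k. k < n})" for b
  have "indep_vars (case_bool (\<Pi>\<^sub>M k\<in>UNIV. borel) (\<Pi>\<^sub>M k\<in>{..<n}. borel \<Otimes>\<^sub>M borel))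
      (case_bool (\<lambda>\<omega> k. X j k \<omega>) (\<lambda>\<omega>. \<lambda>k\<in>{..<n}. (g j k \<omega>, 0::real))) UNIV"
  proof (rule indep_vars_grouped[OF _ mark_sigma_Int_stable])
    show "indep_sets (mark_sigma M X g) (\<Union>b\<in>UNIV. I b)"
      by (rule indep_sets_mono_index[OF _ indep]) (auto simp: I_def tier)
    show "disjoint_family_on I UNIV" by (auto simp: disjoint_family_on_def I_def)
    have "(\<lambda>\<omega> k. X j k \<omega>) \<in> measurable (sigma (space M) (\<Union>i\<in>I True. mark_sigma M X g i))
        (\<Pi>\<^sub>M k\<in>UNIV. borel)"
      by (rule measurable_points_mark_sigma) (simp add: I_def)
    moreover have "g j k \<in> borel_measurable (sigma (space M) (\<Union>i\<in>I False. mark_sigma M X g i))"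
      if "k < n" for k
      using that by (intro measurable_mark_mark_sigma) (simp add: I_def)
    then have "(\<lambda>\<omega>. \<lambda>k\<in>{..<n}. (g j k \<omega>, 0::real))
        \<in> measurable (sigma (space M) (\<Union>i\<in>I False. mark_sigma M X g i)) (\<Pi>\<^sub>M k\<in>{..<n}. borel \<Otimes>\<^sub>M borel)"
      by (intro measurable_restrict measurable_Pair) auto
    ultimately show "case_bool (\<lambda>\<omega> k. X j k \<omega>) (\<lambda>\<omega>. \<lambda>k\<in>{..<n}. (g j k \<omega>, 0::real)) b
        \<in> measurable (sigma (space M) (\<Union>i\<in>I b. mark_sigma M X g i))
          (case_bool (\<Pi>\<^sub>M k\<in>UNIV. borel) (\<Pi>\<^sub>M k\<in>{..<n}. borel \<Otimes>\<^sub>M borel) b)" for b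
      by (cases b) simp_all
  qed
  then show "indep_var (\<Pi>\<^sub>M k\<in>UNIV. borel) (\<lambda>\<omega> k. X j k \<omega>)
      (\<Pi>\<^sub>M k\<in>{..<n}. borel \<Otimes>\<^sub>M borel) (\<lambda>\<omega>. \<lambda>k\<in>{..<n}. (g j k \<omega>, 0::real))"
    unfolding indep_var_def .
  show "indep_vars (\<lambda>_. borel \<Otimes>\<^sub>M borel) (\<lambda>k \<omega>. (g j k \<omega>, 0::real)) {..<n}"
  proof (rule indep_vars_grouped[where I="\<lambda>k. {Inr (j, k)}", OF _ mark_sigma_Int_stable])
    show "indep_sets (mark_sigma M X g) (\<Union>k\<in>{..<n}. {Inr (j, k)})"
      by (rule indep_sets_mono_index[OF _ indep]) (auto simp: tier)
    show "(\<lambda>\<omega>. (g j k \<omega>, 0::real))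
        \<in> measurable (sigma (space M) (\<Union>i\<in>{Inr (j, k)}. mark_sigma M X g i)) (borel \<Otimes>\<^sub>M borel)" for k
      using measurable_mark_mark_sigma[where I="{Inr (j, k)}" and M=M and X=X and g=g] by (intro measurable_Pair) simp_all
  qed (auto simp: disjoint_family_on_def)
qed

definition tier_sigma :: "'a measure \<Rightarrow> (nat \<Rightarrow> nat \<Rightarrow> 'a \<Rightarrow> real \<times> real) \<Rightarrow> (nat \<Rightarrow> nat \<Rightarrow> 'a \<Rightarrow> real)
    \<Rightarrow> nat \<Rightarrow> 'a measure" where
  "tier_sigma M X g j = sigma (space M) (\<Union>i\<in>insert (Inl j) (range (\<lambda>k. Inr (j, k))). mark_sigma M X g i)"

lemma measurable_tier_sigma [measurable]:
  "X j k \<in> borel_measurable (tier_sigma M X g j)" "g j k \<in> borel_measurable (tier_sigma M X g j)"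
proof -
  have "(\<lambda>\<omega> k. X j k \<omega>) \<in> measurable (tier_sigma M X g j) (\<Pi>\<^sub>M k\<in>UNIV. borel)"
    unfolding tier_sigma_def by (rule measurable_points_mark_sigma) simp
  from measurable_compose[OF this measurable_component_singleton[of k UNIV]]
  show "X j k \<in> borel_measurable (tier_sigma M X g j)" by simp
  show "g j k \<in> borel_measurable (tier_sigma M X g j)"
    unfolding tier_sigma_def by (rule measurable_mark_mark_sigma) simp
qed

lemma (in prob_space) indep_vars_tiers:
  assumes indep: "indep_sets (mark_sigma M X g) ({Inl j | j. j < K} \<union> {Inr (j, k) | j k. j < K})"
    and Y: "\<And>j. j < K \<Longrightarrow> Y j \<in> borel_measurable (tier_sigma M X g j)"
  shows "indep_vars (\<lambda>_. borel) Y {..<K}"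
proof (rule indep_vars_grouped[where I="\<lambda>j. insert (Inl j) (range (\<lambda>k. Inr (j, k)))",
      OF _ mark_sigma_Int_stable])
  show "indep_sets (mark_sigma M X g) (\<Union>j\<in>{..<K}. insert (Inl j) (range (\<lambda>k. Inr (j, k))))"
    by (rule indep_sets_mono_index[OF _ indep]) auto
qed (use Y in \<open>auto simp: disjoint_family_on_def tier_sigma_def\<close>)

theorem lemma4:
  fixes M :: "'a measure" and K :: nat and lam P :: "nat \<Rightarrow> real" and Psi :: "nat \<Rightarrow> nat"
    and alpha s :: real
    and X :: "nat \<Rightarrow> nat \<Rightarrow> 'a \<Rightarrow> real \<times> real" and g :: "nat \<Rightarrow> nat \<Rightarrow> 'a \<Rightarrow> real"
  assumes "prob_space M"
    and "\<forall>j<K. lam j > 0 \<and> P j > 0 \<and> Psi j \<ge> 1"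
    and "alpha > 2" and "s > 0"
    and "\<forall>j<K. poisson_pp M (lam j) (X j)"
    and "\<forall>j<K. \<forall>k. distributed M lborel (g j k) (erlang_density (Psi j - 1) 1)"
    and "prob_space.indep_sets M (mark_sigma M X g)
           ({Inl j | j. j < K} \<union> {Inr (j, k) | j k. j < K})"
  shows "prob_space.expectation M (\<lambda>\<omega>. exp_neg s (interference K P alpha X g \<omega>))
         = exp (- (s powr (2 / alpha)) *
                (\<Sum>j<K. lam j * P j powr (2 / alpha) * C_const alpha (Psi j)))"
proof -
  interpret prob_space M by (rule assms(1))
  define Y where "Y j \<omega> = exp_neg s (\<Sum>k. if X j k \<omega> = 0 then \<infinity>
    else ennreal (P j * g j k \<omega> * norm (X j k \<omega>) powr (- alpha)))" for j \<omega>
  have tiers: "expectation (Y j) = exp (- (s powr (2 / alpha)) * (lam j * P j powr (2 / alpha) * C_const alpha (Psi j)))"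
    if "j < K" for j
    unfolding Y_def using assms(2-6) that
    by (intro laplace_transform_tier indep_tier_points_marks[OF assms(7)]) auto
  have indep: "indep_vars (\<lambda>_. borel) Y {..<K}"
    unfolding Y_def by (rule indep_vars_tiers[OF assms(7)]) measurable
  have "expectation (\<lambda>\<omega>. exp_neg s (interference K P alpha X g \<omega>)) = expectation (\<lambda>\<omega>. \<Prod>j<K. Y j \<omega>)"
    by (simp add: interference_def Y_def exp_neg_sum)
  also have "\<dots> = (\<Prod>j<K. expectation (Y j))"
  proof (rule indep_vars_lebesgue_integral[OF _ indep])
    show "integrable M (Y j)" if "j \<in> {..<K}" for j
      using indep that exp_neg_nonneg exp_neg_le_1[of s] assms(4)
      by (intro integrable_const_bound[where B=1]) (auto simp: indep_vars_def2 Y_def)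
  qed simp
  also have "\<dots> = exp (- (s powr (2 / alpha)) * (\<Sum>j<K. lam j * P j powr (2 / alpha) * C_const alpha (Psi j)))"
    by (simp add: tiers exp_sum sum_distrib_left)
  finally show ?thesis .
qed

end
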